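(* Let $\epsilon>0$ and $\mathcal E\in\{\mathrm{Lv},\mathrm{ShG}\}$. For all $t\ge0$, $\mathrm{Hess}\,v^{\mathcal E_\epsilon}_t\ge0$ (as a quadratic form on $X_\epsilon$ at every point); in particular $v^{\mathcal E_\epsilon}_t$ is convex.
   Context: Fix $m>0$, $\lambda>0$, $\beta>0$. $\Omega=\mathbb R^2/\mathbb Z^2$; for $\epsilon>0$ with $1/\epsilon\in\mathbb N$, $\Omega_\epsilon=\Omega\cap\epsilon\mathbb Z^2$, $X_\epsilon=\mathbb R^{\Omega_\epsilon}$, $\int_{\Omega_\epsilon}f\,dx=\epsilon^2\sum_{x\in\Omega_\epsilon}f(x)$. $(\Delta^\epsilon f)(x)=\epsilon^{-2}\sum_{y\sim x}(f(y)-f(x))$; $c^\epsilon_t=(-\Delta^\epsilon+m^2+1/t)^{-1}$ for $t\in(0,\infty)$ (as an operator w.r.t. inner product $\int_{\Omega_\epsilon}fg\,dx$), $c^\epsilon_0=0$. $\mathbf E_c$: expectation over a centred Gaussian $\zeta$ on $X_\epsilon$ with covariance $c$. $V^{\mathrm{Lv}}(s)=e^{\sqrt\beta s}$, $V^{\mathrm{ShG}}(s)=\cosh(\sqrt\beta s)$; $v_0^{\mathcal E_\epsilon}(\phi)=\lambda\int_{\Omega_\epsilon}\epsilon^{\beta/4\pi}V^{\mathcal E}(\phi_x)dx$; $e^{-v^{\mathcal E_\epsilon}_t(\phi)}=\mathbf E_{c^\epsilon_t}[e^{-v_0^{\mathcal E_\epsilon}(\phi+\zeta)}]$. *)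

theory Defs
  imports "HOL-Analysis.Analysis"
begin

text \<open>Lattice torus with spacing eps = 1/N (N a positive natural number).
  Sites are pairs (i,j) with i,j < N; fields are functions (nat * nat) => real,
  only their values on the sites matter.\<close>

type_synonym site = "nat \<times> nat"
type_synonym field = "site \<Rightarrow> real"

definition sites :: "nat \<Rightarrow> site set" where
  "sites N = {0..<N} \<times> {0..<N}"

definition nbrs :: "nat \<Rightarrow> site \<Rightarrow> site list" where
  "nbrs N x = [((fst x + 1) mod N, snd x), ((fst x + N - 1) mod N, snd x),
               (fst x, (snd x + 1) mod N), (fst x, (snd x + N - 1) mod N)]"

definition lat_int :: "nat \<Rightarrow> field \<Rightarrow> real" where
  "lat_int N f = (1 / real N)^2 * (\<Sum>x\<in>sites N. f x)"

definition lap :: "nat \<Rightarrow> field \<Rightarrow> field" where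
  "lap N f x = (real N)^2 * (\<Sum>y\<leftarrow>nbrs N x. f y - f x)"

text \<open>Quadratic form of the precision operator (c_t)^(-1) = -Lap + m^2 + 1/t
  with respect to the inner product lat_int.\<close>
definition prec_form :: "nat \<Rightarrow> real \<Rightarrow> real \<Rightarrow> field \<Rightarrow> real" where
  "prec_form N m t \<zeta> = lat_int N (\<lambda>x. \<zeta> x * (- lap N \<zeta> x + (m^2 + 1/t) * \<zeta> x))"

text \<open>Expectation over the centred Gaussian field on X_eps with covariance c_t
  (w.r.t. the inner product lat_int); for t = 0 the covariance is 0 (point mass at 0).\<close>
definition gauss_exp :: "nat \<Rightarrow> real \<Rightarrow> real \<Rightarrow> (field \<Rightarrow> real) \<Rightarrow> real" where
  "gauss_exp N m t F =
     (if t = 0 then F (\<lambda>_. 0)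
      else (\<integral>\<zeta>. F \<zeta> * exp (- prec_form N m t \<zeta> / 2) \<partial>(PiM (sites N) (\<lambda>_. lborel)))
         / (\<integral>\<zeta>. exp (- prec_form N m t \<zeta> / 2) \<partial>(PiM (sites N) (\<lambda>_. lborel))))"

datatype model = Lv | ShG

definition Vpot :: "model \<Rightarrow> real \<Rightarrow> real \<Rightarrow> real" where
  "Vpot E \<beta> s = (case E of Lv \<Rightarrow> exp (sqrt \<beta> * s) | ShG \<Rightarrow> cosh (sqrt \<beta> * s))"

definition v0 :: "nat \<Rightarrow> real \<Rightarrow> real \<Rightarrow> model \<Rightarrow> field \<Rightarrow> real" where
  "v0 N lam \<beta> E \<phi> = lam * lat_int N (\<lambda>x. (1 / real N) powr (\<beta> / (4 * pi)) * Vpot E \<beta> (\<phi> x))"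

definition vt :: "nat \<Rightarrow> real \<Rightarrow> real \<Rightarrow> real \<Rightarrow> model \<Rightarrow> real \<Rightarrow> field \<Rightarrow> real" where
  "vt N m lam \<beta> E t \<phi> = - ln (gauss_exp N m t (\<lambda>\<zeta>. exp (- v0 N lam \<beta> E (\<lambda>x. \<phi> x + \<zeta> x))))"

end

theory Submission
  imports Defs "HOL-Probability.Distributions"
begin

text \<open>Up to the normalising constant, \<open>exp (- v\<^sub>t \<phi>)\<close> is the integral over \<open>\<zeta>\<close> of
  \<open>exp (- v\<^sub>0 (\<phi> + \<zeta>) - \<langle>\<zeta>, c\<^sub>t\<^sup>-\<^sup>1 \<zeta>\<rangle> / 2)\<close>. The exponent is jointly convex in \<open>(\<phi>, \<zeta>)\<close>:
  \<open>v\<^sub>0\<close> is a sum of convex functions of single coordinates, and the precision form is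
  convex because \<open>-\<Delta>\<close> is positive semidefinite (summation by parts along the torus shifts).
  By Prekopa's theorem marginals of log-concave functions are log-concave, so \<open>v\<^sub>t\<close> is convex.
  Prekopa's theorem is proved by integrating out one site at a time, using the
  one-dimensional Prekopa--Leindler inequality, which in turn follows from the layer-cake
  formula and the Brunn--Minkowski inequality for intervals.

  Convexity gives a nonnegative second derivative along every line once \<open>v\<^sub>t\<close> is known to be
  twice differentiable there. This follows by differentiating under the integral sign: since
  \<open>|V'| \<le> \<surd>\<beta> V\<close>, \<open>V'' = \<beta> V\<close> and \<open>u\<^sup>k e\<^sup>-\<^sup>u\<close> is bounded for \<open>u \<ge> 0\<close>, the first two derivatives of
  \<open>exp (- v\<^sub>0)\<close> along a line are bounded uniformly in \<open>\<zeta>\<close>.\<close>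

section \<open>The one-dimensional Prekopa--Leindler inequality\<close>

lemma is_interval_Inf_Sup_combination:
  fixes A :: "real set"
  assumes iv: "is_interval A" and ne: "A \<noteq> {}" and ba: "bdd_above A" and bb: "bdd_below A"
    and t: "0 < t" "t < 1"
  shows "Inf A + t * (Sup A - Inf A) \<in> A"
proof (cases "Inf A < Sup A")
  case True
  let ?z = "Inf A + t * (Sup A - Inf A)"
  have "Inf A < ?z" using True t by (simp add: algebra_simps)
  then obtain p where p: "p \<in> A" "p < ?z" using ne bb by (meson cInf_less_iff)
  have "?z < Sup A" using True t
    by (smt (verit) mult_less_cancel_right2)
  then obtain q where q: "q \<in> A" "?z < q" using ne ba by (meson less_cSup_iff)
  show ?thesis using iv p q unfolding is_interval_1 by (meson less_le_not_le nle_le)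
next
  case False
  obtain y where y: "y \<in> A" using ne by auto
  have "Inf A \<le> y" "y \<le> Sup A" using y ba bb by (auto intro: cInf_lower cSup_upper)
  then have "y = Inf A" "Sup A = Inf A" using False by linarith+
  then show ?thesis using y by simp
qed

lemma emeasure_lborel_le_Sup_minus_Inf:
  fixes A :: "real set"
  assumes ne: "A \<noteq> {}" and ba: "bdd_above A" and bb: "bdd_below A"
  shows "emeasure lborel A \<le> ennreal (Sup A - Inf A)"
proof -
  have "A \<subseteq> {Inf A..Sup A}" using ba bb by (auto intro: cInf_lower cSup_upper)
  then have "emeasure lborel A \<le> emeasure lborel {Inf A..Sup A}"
    by (intro emeasure_mono) auto
  also have "\<dots> = ennreal (Sup A - Inf A)" using ne ba bb by (simp add: cInf_le_cSup)
  finally show ?thesis .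
qed

lemma ennreal_eq_top_if_unbounded:
  fixes X :: ennreal
  assumes "\<And>M. M > 0 \<Longrightarrow> ennreal M \<le> X"
  shows "X = \<infinity>"
proof (rule ccontr)
  assume "X \<noteq> \<infinity>"
  then obtain c where c: "X = ennreal c" "0 \<le> c" by (cases X) auto
  have "ennreal (c + 1) \<le> X" using assms[of "c+1"] c by simp
  then show False using c by (simp add: ennreal_le_iff)
qed

lemma emeasure_lborel_combination_unbounded:
  fixes A B C :: "real set" and a b :: real
  assumes iv: "is_interval A" and neA: "A \<noteq> {}" and neB: "B \<noteq> {}"
    and unb: "\<not> (bdd_above A \<and> bdd_below A)"
    and Cm: "C \<in> sets lborel" and C: "\<forall>x\<in>A. \<forall>y\<in>B. a * x + b * y \<in> C" and a: "0 < a"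
  shows "emeasure lborel C = \<infinity>"
proof (rule ennreal_eq_top_if_unbounded)
  fix M :: real assume M: "M > 0"
  obtain y0 where y0: "y0 \<in> B" using neB by auto
  obtain p q where pq: "p \<in> A" "q \<in> A" "p + M / a \<le> q \<or> q + M / a \<le> p"
  proof (cases "bdd_above A")
    case True
    then have nb: "\<not> bdd_below A" using unb by auto
    obtain q where q: "q \<in> A" using neA by auto
    obtain p where "p \<in> A" "p < q - M / a" using nb unfolding bdd_below_def
      by (meson not_le_imp_less)
    then show ?thesis using that q by force
  next
    case False
    obtain p where p: "p \<in> A" using neA by auto
    obtain q where "q \<in> A" "q > p + M / a" using False unfolding bdd_above_def
      by (meson not_le_imp_less)
    then show ?thesis using that p by force
  qed
  define l where "l = min p q"
  define u where "u = max p q"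
  have lu: "l \<in> A" "u \<in> A" "l + M / a \<le> u" using pq by (auto simp: l_def u_def min_def max_def)
  have seg: "x \<in> A" if "l \<le> x" "x \<le> u" for x using iv lu that unfolding is_interval_1 by blast
  have "{a * l + b * y0 .. a * u + b * y0} \<subseteq> C"
  proof
    fix z assume z: "z \<in> {a * l + b * y0 .. a * u + b * y0}"
    let ?x = "(z - b * y0) / a"
    have "?x \<in> A" using z a by (intro seg) (auto simp: field_simps)
    then have "a * ?x + b * y0 \<in> C" using C y0 by blast
    then show "z \<in> C" using a by simp
  qed
  then have "emeasure lborel {a * l + b * y0 .. a * u + b * y0} \<le> emeasure lborel C"
    using Cm by (intro emeasure_mono) auto
  moreover have "a * l + M \<le> a * u" using lu a by (simp add: field_simps)
  then have "ennreal M \<le> emeasure lborel {a * l + b * y0 .. a * u + b * y0}"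
    using M by (subst emeasure_lborel_Icc) (auto intro!: ennreal_leI)
  ultimately show "ennreal M \<le> emeasure lborel C" by order
qed

lemma greaterThanLessThan_Inf_Sup_combination_subset:
  fixes A B C :: "real set" and a :: real
  assumes ivA: "is_interval A" and ivB: "is_interval B" and neA: "A \<noteq> {}" and neB: "B \<noteq> {}"
    and bdd: "bdd_above A" "bdd_below A" "bdd_above B" "bdd_below B"
    and C: "\<forall>x\<in>A. \<forall>y\<in>B. a * x + (1 - a) * y \<in> C"
  shows "{a * Inf A + (1 - a) * Inf B <..< a * Sup A + (1 - a) * Sup B} \<subseteq> C"
proof
  let ?L = "a * (Sup A - Inf A) + (1 - a) * (Sup B - Inf B)"
  fix z assume z: "z \<in> {a * Inf A + (1 - a) * Inf B <..< a * Sup A + (1 - a) * Sup B}"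
  have L: "?L > 0" using z by (auto simp: algebra_simps)
  define t where "t = (z - (a * Inf A + (1 - a) * Inf B)) / ?L"
  have t: "0 < t" "t < 1" using z L unfolding t_def by (auto simp: field_simps)
  have "Inf A + t * (Sup A - Inf A) \<in> A" "Inf B + t * (Sup B - Inf B) \<in> B"
    using is_interval_Inf_Sup_combination[OF ivA neA _ _ t] is_interval_Inf_Sup_combination[OF ivB neB _ _ t] bdd
    by auto
  then have "a * (Inf A + t * (Sup A - Inf A)) + (1 - a) * (Inf B + t * (Sup B - Inf B)) \<in> C"
    using C by blast
  also have "a * (Inf A + t * (Sup A - Inf A)) + (1 - a) * (Inf B + t * (Sup B - Inf B))
      = a * Inf A + (1 - a) * Inf B + t * ?L" by (simp add: algebra_simps)
  also have "\<dots> = z" using L unfolding t_def by simp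
  finally show "z \<in> C" .
qed

lemma brunn_minkowski_interval:
  fixes A B C :: "real set" and a :: real
  assumes ivA: "is_interval A" and ivB: "is_interval B" and neA: "A \<noteq> {}" and neB: "B \<noteq> {}"
    and Cm: "C \<in> sets lborel" and C: "\<forall>x\<in>A. \<forall>y\<in>B. a * x + (1 - a) * y \<in> C"
    and a: "0 < a" "a < 1"
  shows "ennreal a * emeasure lborel A + ennreal (1 - a) * emeasure lborel B \<le> emeasure lborel C"
proof (cases "bdd_above A \<and> bdd_below A \<and> bdd_above B \<and> bdd_below B")
  case False
  then consider "\<not> (bdd_above A \<and> bdd_below A)" | "\<not> (bdd_above B \<and> bdd_below B)" by auto
  then have "emeasure lborel C = \<infinity>"
  proof cases
    case 1
    then show ?thesis using emeasure_lborel_combination_unbounded[OF ivA neA neB 1 Cm C] a by simp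
  next
    case 2
    have C': "\<forall>y\<in>B. \<forall>x\<in>A. (1 - a) * y + a * x \<in> C" using C by (simp add: add.commute)
    show ?thesis using emeasure_lborel_combination_unbounded[OF ivB neB neA 2 Cm C'] a by simp
  qed
  then show ?thesis by simp
next
  case True
  have lA: "Inf A \<le> Sup A" "Inf B \<le> Sup B" using True neA neB
    by (meson all_not_in_conv cInf_lower cSup_upper order.trans)+
  have "ennreal a * emeasure lborel A + ennreal (1 - a) * emeasure lborel B
     \<le> ennreal a * ennreal (Sup A - Inf A) + ennreal (1 - a) * ennreal (Sup B - Inf B)"
    using emeasure_lborel_le_Sup_minus_Inf[OF neA] emeasure_lborel_le_Sup_minus_Inf[OF neB] True
    by (intro add_mono mult_left_mono) auto
  also have "\<dots> = ennreal (a * (Sup A - Inf A) + (1 - a) * (Sup B - Inf B))" using a lA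
    by (simp add: ennreal_mult[symmetric] ennreal_plus[symmetric] del: ennreal_plus)
  also have "\<dots> = emeasure lborel {a * Inf A + (1 - a) * Inf B <..< a * Sup A + (1 - a) * Sup B}"
  proof -
    have "a * Inf A + (1 - a) * Inf B \<le> a * Sup A + (1 - a) * Sup B" using a lA
      by (intro add_mono mult_left_mono) auto
    then show ?thesis by (simp add: emeasure_lborel_Ioo algebra_simps)
  qed
  also have "\<dots> \<le> emeasure lborel C"
    using greaterThanLessThan_Inf_Sup_combination_subset[OF ivA ivB neA neB _ _ _ _ C] True Cm
    by (intro emeasure_mono) auto
  finally show ?thesis .
qed

lemma measurable_emeasure_superlevel:
  fixes f :: "real \<Rightarrow> real"
  assumes [measurable]: "f \<in> borel_measurable borel"
  shows "(\<lambda>s. emeasure lborel {y. s * c < f y}) \<in> borel_measurable borel"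
proof -
  have "(\<lambda>s. emeasure lborel {y. s * c < f y}) \<in> borel_measurable lborel"
  proof (rule lborel.measurable_emeasure)
    show "{x \<in> space (lborel \<Otimes>\<^sub>M lborel). snd x \<in> {y. fst x * c < f y}} \<in> sets (lborel \<Otimes>\<^sub>M lborel)"
      by measurable
  qed auto
  then show ?thesis by simp
qed

lemma nn_integral_layer_cake:
  fixes f :: "real \<Rightarrow> real" and c :: real
  assumes fm[measurable]: "f \<in> borel_measurable borel" and f0: "\<And>y. 0 \<le> f y" and c: "0 < c"
  shows "(\<integral>\<^sup>+y. ennreal (f y) \<partial>lborel)
       = ennreal c * (\<integral>\<^sup>+s. indicator {0..} s * emeasure lborel {y. s * c < f y} \<partial>lborel)"
proof -
  have pt: "ennreal (f y) = ennreal c * (\<integral>\<^sup>+s. indicator {0..} s * indicator {y. s * c < f y} y \<partial>lborel)" for y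
  proof -
    have "(\<lambda>s. indicator {0..} s * indicator {y. s * c < f y} y :: ennreal) = indicator {0..<f y / c}"
      using c by (auto simp: indicator_def field_simps fun_eq_iff)
    then have "(\<integral>\<^sup>+s. indicator {0..} s * indicator {y. s * c < f y} y \<partial>lborel) = ennreal (f y / c)"
      using f0[of y] c by simp
    moreover have "ennreal (f y) = ennreal c * ennreal (f y / c)"
      using c f0[of y] by (subst ennreal_mult[symmetric]) auto
    ultimately show ?thesis by simp
  qed
  have "(\<integral>\<^sup>+y. ennreal (f y) \<partial>lborel)
      = (\<integral>\<^sup>+y. ennreal c * (\<integral>\<^sup>+s. indicator {0..} s * indicator {y. s * c < f y} y \<partial>lborel) \<partial>lborel)"
    by (subst pt) simp
  also have "\<dots> = ennreal c * (\<integral>\<^sup>+y. (\<integral>\<^sup>+s. indicator {0..} s * indicator {y. s * c < f y} y \<partial>lborel) \<partial>lborel)"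
    by (rule nn_integral_cmult) measurable
  also have "(\<integral>\<^sup>+y. (\<integral>\<^sup>+s. indicator {0..} s * indicator {y. s * c < f y} y \<partial>lborel) \<partial>lborel)
      = (\<integral>\<^sup>+s. (\<integral>\<^sup>+y. indicator {0..} s * indicator {y. s * c < f y} y \<partial>lborel) \<partial>lborel)"
    by (rule lborel_pair.Fubini') measurable
  also have "\<dots> = (\<integral>\<^sup>+s. indicator {0..} s * emeasure lborel {y. s * c < f y} \<partial>lborel)"
    by (intro nn_integral_cong) (simp add: nn_integral_cmult)
  finally show ?thesis .
qed

lemma superlevel_layer_cake:
  fixes f :: "real \<Rightarrow> real"
  assumes fi: "integrable lborel f" and f0: "\<And>y. 0 \<le> f y" and M: "0 < M" and fM: "\<And>y. f y \<le> M"
  shows "(\<integral>\<^sup>+s. indicator {0<..<1} s * emeasure lborel {y. s * M < f y} \<partial>lborel)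
       = ennreal ((\<integral>y. f y \<partial>lborel) / M)"
proof -
  have fm[measurable]: "f \<in> borel_measurable borel" using fi by auto
  have "(\<integral>\<^sup>+s. indicator {0..} s * emeasure lborel {y. s * M < f y} \<partial>lborel)
      = (\<integral>\<^sup>+s. indicator {0<..<1} s * emeasure lborel {y. s * M < f y} \<partial>lborel)"
  proof (intro nn_integral_cong_AE)
    show "AE s in lborel. indicator {0..} s * emeasure lborel {y. s * M < f y}
        = indicator {0<..<1} s * emeasure lborel {y. s * M < f y}"
      using AE_lborel_singleton[of 0]
    proof eventually_elim
      case (elim s)
      show ?case
      proof (cases "1 \<le> s")
        case True
        have "{y. s * M < f y} = {}" using True M fM
          by (auto simp: not_less intro: order.trans[OF fM])
        then show ?thesis by simp
      next
        case False
        then show ?thesis using elim by (auto simp: indicator_def)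
      qed
    qed
  qed
  then have "ennreal (\<integral>y. f y \<partial>lborel)
      = ennreal M * (\<integral>\<^sup>+s. indicator {0<..<1} s * emeasure lborel {y. s * M < f y} \<partial>lborel)"
    using nn_integral_layer_cake[OF fm f0 M] fi f0 by (simp add: nn_integral_eq_integral)
  then have "ennreal (1 / M) * ennreal (\<integral>y. f y \<partial>lborel)
      = (\<integral>\<^sup>+s. indicator {0<..<1} s * emeasure lborel {y. s * M < f y} \<partial>lborel)"
    using M by (simp add: mult.assoc[symmetric] ennreal_mult[symmetric])
  moreover have "ennreal (1 / M) * ennreal (\<integral>y. f y \<partial>lborel) = ennreal ((\<integral>y. f y \<partial>lborel) / M)"
    using M f0 by (simp add: ennreal_mult[symmetric] integral_nonneg_AE)
  ultimately show ?thesis by simp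
qed

lemma Sup_range_pos_if_integral_pos:
  fixes f :: "real \<Rightarrow> real"
  assumes "bdd_above (range f)" and "\<And>y. 0 \<le> f y" and "0 < (\<integral>y. f y \<partial>lborel)"
  shows "0 < Sup (range f)"
proof (rule ccontr)
  assume "\<not> 0 < Sup (range f)"
  then have "f y \<le> 0" for y using cSup_upper[OF rangeI[of f y] assms(1)] by linarith
  then have "f = (\<lambda>_. 0)" using assms(2) by (intro ext antisym) auto
  then show False using assms(3) by simp
qed

lemma superlevel_below_Sup_nonempty:
  fixes f :: "real \<Rightarrow> real"
  assumes "bdd_above (range f)" and "0 < Sup (range f)" and "s < 1"
  shows "{y. s * Sup (range f) < f y} \<noteq> {}"
proof -
  have "s * Sup (range f) < Sup (range f)" using assms(2,3) by simp
  then show ?thesis using assms(1) less_cSup_iff[of "range f"] by auto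
qed

lemma brunn_minkowski_superlevel:
  fixes f g h :: "real \<Rightarrow> real" and a :: real
  assumes a: "0 < a" "a < 1" and s: "0 < s" and Mp: "0 < Mf" "0 < Mg"
    and hm[measurable]: "h \<in> borel_measurable borel"
    and fq: "is_interval {y. s * Mf < f y}" and gq: "is_interval {y. s * Mg < g y}"
    and ne: "{y. s * Mf < f y} \<noteq> {}" "{y. s * Mg < g y} \<noteq> {}"
    and hyp: "\<And>y1 y2. f y1 powr a * g y2 powr (1 - a) \<le> h (a * y1 + (1 - a) * y2)"
  shows "ennreal a * emeasure lborel {y. s * Mf < f y} + ennreal (1 - a) * emeasure lborel {y. s * Mg < g y}
      \<le> emeasure lborel {y. s * (Mf powr a * Mg powr (1 - a)) < h y}"
proof (rule brunn_minkowski_interval[OF fq gq ne _ _ a])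
  show "{y. s * (Mf powr a * Mg powr (1 - a)) < h y} \<in> sets lborel" by measurable
  show "\<forall>x\<in>{y. s * Mf < f y}. \<forall>y\<in>{y. s * Mg < g y}. a * x + (1 - a) * y \<in> {y. s * (Mf powr a * Mg powr (1 - a)) < h y}"
  proof (intro ballI)
    fix y1 y2 assume y1: "y1 \<in> {y. s * Mf < f y}" and y2: "y2 \<in> {y. s * Mg < g y}"
    have "(s * Mf) powr a < f y1 powr a" using y1 s Mp a by (intro powr_less_mono2) auto
    moreover have "(s * Mg) powr (1 - a) < g y2 powr (1 - a)" using y2 s Mp a by (intro powr_less_mono2) auto
    ultimately have "(s * Mf) powr a * (s * Mg) powr (1 - a) < f y1 powr a * g y2 powr (1 - a)"
      using s Mp by (intro mult_strict_mono) auto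
    moreover have "(s * Mf) powr a * (s * Mg) powr (1 - a) = s * (Mf powr a * Mg powr (1 - a))"
      using s Mp by (simp add: powr_mult powr_add[symmetric] algebra_simps)
    ultimately show "a * y1 + (1 - a) * y2 \<in> {y. s * (Mf powr a * Mg powr (1 - a)) < h y}"
      using hyp[of y1 y2] by simp
  qed
qed

lemma layer_cake_combination_le:
  fixes f g h :: "real \<Rightarrow> real" and a :: real
  assumes a: "0 < a" "a < 1"
    and fi: "integrable lborel f" and f0: "\<And>y. 0 \<le> f y" and Mf: "0 < Mf" and fle: "\<And>y. f y \<le> Mf"
    and gi: "integrable lborel g" and g0: "\<And>y. 0 \<le> g y" and Mg: "0 < Mg" and gle: "\<And>y. g y \<le> Mg"
    and hi: "integrable lborel h" and h0: "\<And>y. 0 \<le> h y" and K: "0 < K"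
    and BM: "\<And>s. 0 < s \<Longrightarrow> s < 1 \<Longrightarrow> ennreal a * emeasure lborel {y. s * Mf < f y}
        + ennreal (1 - a) * emeasure lborel {y. s * Mg < g y} \<le> emeasure lborel {y. s * K < h y}"
  shows "K * (a * ((\<integral>y. f y \<partial>lborel) / Mf) + (1 - a) * ((\<integral>y. g y \<partial>lborel) / Mg)) \<le> (\<integral>y. h y \<partial>lborel)"
proof -
  have [measurable]: "f \<in> borel_measurable borel" "g \<in> borel_measurable borel"
    "h \<in> borel_measurable borel" using fi gi hi by auto
  note measurable_emeasure_superlevel[measurable]
  define X where "X = (\<integral>y. f y \<partial>lborel)"
  define Y where "Y = (\<integral>y. g y \<partial>lborel)"
  have "0 \<le> X" "0 \<le> Y" unfolding X_def Y_def using f0 g0 by (auto intro: integral_nonneg_AE)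
  have "ennreal (K * (a * (X / Mf) + (1 - a) * (Y / Mg)))
      = ennreal K * (ennreal a * ennreal (X / Mf) + ennreal (1 - a) * ennreal (Y / Mg))"
    using K a Mf Mg \<open>0 \<le> X\<close> \<open>0 \<le> Y\<close>
    by (simp add: ennreal_mult[symmetric] ennreal_plus[symmetric] del: ennreal_plus)
  also have "\<dots> = ennreal K * (\<integral>\<^sup>+s. ennreal a * (indicator {0<..<1} s * emeasure lborel {y. s * Mf < f y})
            + ennreal (1 - a) * (indicator {0<..<1} s * emeasure lborel {y. s * Mg < g y}) \<partial>lborel)"
    using superlevel_layer_cake[OF fi f0 Mf fle] superlevel_layer_cake[OF gi g0 Mg gle]
    by (simp add: nn_integral_add nn_integral_cmult X_def Y_def)
  also have "\<dots> \<le> ennreal K * (\<integral>\<^sup>+s. indicator {0..} s * emeasure lborel {y. s * K < h y} \<partial>lborel)"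
  proof (intro mult_left_mono nn_integral_mono)
    fix s :: real
    show "ennreal a * (indicator {0<..<1} s * emeasure lborel {y. s * Mf < f y})
            + ennreal (1 - a) * (indicator {0<..<1} s * emeasure lborel {y. s * Mg < g y})
        \<le> indicator {0..} s * emeasure lborel {y. s * K < h y}"
      using BM[of s] by (cases "0 < s \<and> s < 1") (auto simp: indicator_def)
  qed simp
  also have "\<dots> = (\<integral>\<^sup>+y. ennreal (h y) \<partial>lborel)"
    using nn_integral_layer_cake[OF _ h0 K] by simp
  also have "\<dots> = ennreal (\<integral>y. h y \<partial>lborel)"
    using hi h0 by (intro nn_integral_eq_integral) auto
  finally have "ennreal (K * (a * (X / Mf) + (1 - a) * (Y / Mg))) \<le> ennreal (\<integral>y. h y \<partial>lborel)" .
  moreover have "0 \<le> (\<integral>y. h y \<partial>lborel)" using h0 by (auto intro: integral_nonneg_AE)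
  ultimately show ?thesis unfolding X_def Y_def by (simp add: ennreal_le_iff del: ennreal_plus)
qed

lemma prekopa_leindler_1d:
  fixes f g h :: "real \<Rightarrow> real" and a :: real
  assumes a: "0 < a" "a < 1"
    and f0: "\<And>y. 0 \<le> f y" and g0: "\<And>y. 0 \<le> g y" and h0: "\<And>y. 0 \<le> h y"
    and fi: "integrable lborel f" and gi: "integrable lborel g" and hi: "integrable lborel h"
    and fb: "bdd_above (range f)" and gb: "bdd_above (range g)"
    and fq: "\<And>r. is_interval {y. r < f y}" and gq: "\<And>r. is_interval {y. r < g y}"
    and hyp: "\<And>y1 y2. f y1 powr a * g y2 powr (1 - a) \<le> h (a * y1 + (1 - a) * y2)"
  shows "(\<integral>y. f y \<partial>lborel) powr a * (\<integral>y. g y \<partial>lborel) powr (1 - a) \<le> (\<integral>y. h y \<partial>lborel)"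
proof -
  have hm: "h \<in> borel_measurable borel" using hi by auto
  define X where "X = (\<integral>y. f y \<partial>lborel)"
  define Y where "Y = (\<integral>y. g y \<partial>lborel)"
  have "0 \<le> X" "0 \<le> Y" unfolding X_def Y_def using f0 g0 by (auto intro: integral_nonneg_AE)
  have H0: "0 \<le> (\<integral>y. h y \<partial>lborel)" using h0 by (auto intro: integral_nonneg_AE)
  show ?thesis
  proof (cases "X = 0 \<or> Y = 0")
    case True
    then show ?thesis using H0 unfolding X_def Y_def by auto
  next
    case False
    then have Xp: "0 < X" "0 < Y" using \<open>0 \<le> X\<close> \<open>0 \<le> Y\<close> by auto
    define Mf where "Mf = Sup (range f)"
    define Mg where "Mg = Sup (range g)"
    have fle: "f y \<le> Mf" "g y \<le> Mg" for y unfolding Mf_def Mg_def using fb gb by (auto intro: cSup_upper)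
    have Mp: "0 < Mf" "0 < Mg" unfolding Mf_def Mg_def
      using Sup_range_pos_if_integral_pos fb gb f0 g0 Xp unfolding X_def Y_def by auto
    define K where "K = Mf powr a * Mg powr (1 - a)"
    have Kp: "0 < K" unfolding K_def using Mp by simp
    \<comment> \<open>compare the superlevel sets at the same height relative to the suprema\<close>
    have BM: "ennreal a * emeasure lborel {y. s * Mf < f y} + ennreal (1 - a) * emeasure lborel {y. s * Mg < g y}
        \<le> emeasure lborel {y. s * K < h y}" if "0 < s" "s < 1" for s
      unfolding K_def using that Mp fb gb superlevel_below_Sup_nonempty[of f s] superlevel_below_Sup_nonempty[of g s]
      by (intro brunn_minkowski_superlevel a hm fq gq hyp) (auto simp: Mf_def Mg_def)
    have main: "K * (a * (X / Mf) + (1 - a) * (Y / Mg)) \<le> (\<integral>y. h y \<partial>lborel)"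
      unfolding X_def Y_def by (rule layer_cake_combination_le[OF a fi f0 Mp(1) fle(1) gi g0 Mp(2) fle(2) hi h0 Kp BM])
    have "(X / Mf) powr a * (Y / Mg) powr (1 - a) \<le> a * (X / Mf) + (1 - a) * (Y / Mg)"
      using Xp Mp a by (intro Youngs_inequality_0) auto
    then have "K * ((X / Mf) powr a * (Y / Mg) powr (1 - a)) \<le> K * (a * (X / Mf) + (1 - a) * (Y / Mg))"
      using Kp by simp
    moreover have "K * ((X / Mf) powr a * (Y / Mg) powr (1 - a)) = X powr a * Y powr (1 - a)"
      unfolding K_def using Xp Mp by (simp add: powr_divide)
    ultimately show ?thesis using main unfolding X_def Y_def by simp
  qed
qed

section \<open>Prekopa's theorem: marginals of log-concave functions\<close>

definition jointly_log_concave :: "(('a \<Rightarrow> real) \<Rightarrow> ('b \<Rightarrow> real) \<Rightarrow> real) \<Rightarrow> bool" where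
  "jointly_log_concave H \<longleftrightarrow> (\<forall>\<phi> \<psi> \<zeta> \<xi> a. 0 < a \<and> a < 1 \<longrightarrow>
      H \<phi> \<zeta> powr a * H \<psi> \<xi> powr (1 - a) \<le> H (\<lambda>x. a * \<phi> x + (1 - a) * \<psi> x) (\<lambda>x. a * \<zeta> x + (1 - a) * \<xi> x))"

definition depends_only_on :: "'b set \<Rightarrow> ('a \<Rightarrow> ('b \<Rightarrow> real) \<Rightarrow> real) \<Rightarrow> bool" where
  "depends_only_on I H \<longleftrightarrow> (\<forall>\<phi> \<zeta> \<xi>. (\<forall>x\<in>I. \<zeta> x = \<xi> x) \<longrightarrow> H \<phi> \<zeta> = H \<phi> \<xi>)"

lemma jointly_log_concaveD:
  assumes "jointly_log_concave H" and "0 < a" and "a < 1"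
  shows "H \<phi> \<zeta> powr a * H \<psi> \<xi> powr (1 - a) \<le> H (\<lambda>x. a * \<phi> x + (1 - a) * \<psi> x) (\<lambda>x. a * \<zeta> x + (1 - a) * \<xi> x)"
  using assms unfolding jointly_log_concave_def by blast

lemma is_interval_superlevel_update:
  assumes L: "jointly_log_concave H" and H0: "\<And>\<phi> \<zeta>. 0 \<le> H \<phi> \<zeta>"
  shows "is_interval {y. r < H \<phi> (\<zeta>(i := y))}"
  unfolding is_interval_1
proof (intro ballI allI impI)
  fix p q x assume p: "p \<in> {y. r < H \<phi> (\<zeta>(i := y))}" and q: "q \<in> {y. r < H \<phi> (\<zeta>(i := y))}"
    and x: "p \<le> x \<and> x \<le> q"
  show "x \<in> {y. r < H \<phi> (\<zeta>(i := y))}"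
  proof (cases "x = p \<or> x = q")
    case True then show ?thesis using p q by auto
  next
    case False
    then have pq: "p < x" "x < q" using x by auto
    define t where "t = (q - x) / (q - p)"
    have t: "0 < t" "t < 1" using pq unfolding t_def by (auto simp: field_simps)
    have "t * (q - p) = q - x" using pq unfolding t_def by simp
    then have xt: "x = t * p + (1 - t) * q" by (simp add: algebra_simps)
    have "H \<phi> (\<zeta>(i := p)) powr t * H \<phi> (\<zeta>(i := q)) powr (1 - t)
        \<le> H (\<lambda>x. t * \<phi> x + (1 - t) * \<phi> x) (\<lambda>y. t * (\<zeta>(i := p)) y + (1 - t) * (\<zeta>(i := q)) y)"
      using jointly_log_concaveD[OF L t] .
    also have "(\<lambda>x. t * \<phi> x + (1 - t) * \<phi> x) = \<phi>" by (simp add: algebra_simps)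
    also have "(\<lambda>y. t * (\<zeta>(i := p)) y + (1 - t) * (\<zeta>(i := q)) y) = \<zeta>(i := x)"
      using xt by (auto simp: fun_eq_iff algebra_simps)
    finally have main: "H \<phi> (\<zeta>(i := p)) powr t * H \<phi> (\<zeta>(i := q)) powr (1 - t) \<le> H \<phi> (\<zeta>(i := x))" .
    show ?thesis
    proof (cases "r < 0")
      case True then show ?thesis using H0 by (simp add: less_le_trans[OF True])
    next
      case False
      define m where "m = min (H \<phi> (\<zeta>(i := p))) (H \<phi> (\<zeta>(i := q)))"
      have m: "r < m" using p q unfolding m_def by auto
      then have mp: "0 < m" using False by linarith
      have "m = m powr t * m powr (1 - t)" using mp by (simp add: powr_add[symmetric])
      also have "\<dots> \<le> H \<phi> (\<zeta>(i := p)) powr t * H \<phi> (\<zeta>(i := q)) powr (1 - t)"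
        using mp t unfolding m_def by (intro mult_mono powr_mono2) auto
      finally show ?thesis using main m by simp
    qed
  qed
qed

lemma jointly_log_concave_integral_update:
  fixes H :: "('a \<Rightarrow> real) \<Rightarrow> ('b \<Rightarrow> real) \<Rightarrow> real"
  assumes L: "jointly_log_concave H" and H0: "\<And>\<phi> \<zeta>. 0 \<le> H \<phi> \<zeta>"
    and int: "\<And>\<phi> \<zeta>. integrable lborel (\<lambda>y. H \<phi> (\<zeta>(i := y)))"
    and bdd: "\<And>\<phi> \<zeta>. bdd_above (range (\<lambda>y. H \<phi> (\<zeta>(i := y))))"
  shows "jointly_log_concave (\<lambda>\<phi> \<zeta>. \<integral>y. H \<phi> (\<zeta>(i := y)) \<partial>lborel)"
  unfolding jointly_log_concave_def
proof (intro allI impI)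
  fix \<phi> \<psi> :: "'a \<Rightarrow> real" and \<zeta> \<xi> :: "'b \<Rightarrow> real" and a :: real
  assume a: "0 < a \<and> a < 1"
  let ?m\<phi> = "\<lambda>x. a * \<phi> x + (1 - a) * \<psi> x" and ?m\<zeta> = "\<lambda>x. a * \<zeta> x + (1 - a) * \<xi> x"
  show "(\<integral>y. H \<phi> (\<zeta>(i := y)) \<partial>lborel) powr a * (\<integral>y. H \<psi> (\<xi>(i := y)) \<partial>lborel) powr (1 - a)
      \<le> (\<integral>y. H ?m\<phi> (?m\<zeta>(i := y)) \<partial>lborel)"
  proof (rule prekopa_leindler_1d)
    show "H \<phi> (\<zeta>(i := y1)) powr a * H \<psi> (\<xi>(i := y2)) powr (1 - a) \<le> H ?m\<phi> (?m\<zeta>(i := a * y1 + (1 - a) * y2))"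
      for y1 y2
    proof -
      have "(\<lambda>x. a * (\<zeta>(i := y1)) x + (1 - a) * (\<xi>(i := y2)) x) = ?m\<zeta>(i := a * y1 + (1 - a) * y2)"
        by (auto simp: fun_eq_iff)
      then show ?thesis using jointly_log_concaveD[OF L, of a \<phi> "\<zeta>(i := y1)" \<psi> "\<xi>(i := y2)"] a by simp
    qed
  qed (use a H0 int bdd is_interval_superlevel_update[OF L H0] in auto)
qed

lemma integrable_PiM_bounded_by_product:
  fixes I :: "'b set" and g :: "real \<Rightarrow> real"
  assumes I: "finite I" and F0: "\<And>\<zeta>. 0 \<le> F \<zeta>" and Fm: "F \<in> borel_measurable (PiM I (\<lambda>_. lborel))"
    and Fb: "\<And>\<zeta>. F \<zeta> \<le> B * (\<Prod>x\<in>I. g (\<zeta> x))" and gi: "integrable lborel g"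
  shows "integrable (PiM I (\<lambda>_. lborel)) F"
proof -
  interpret product_sigma_finite "\<lambda>_::'b. lborel" by standard
  have "integrable (PiM I (\<lambda>_. lborel)) (\<lambda>\<zeta>. B * (\<Prod>x\<in>I. g (\<zeta> x)))"
    using I gi by (intro integrable_mult_right product_integrable_prod) auto
  then show ?thesis
  proof (rule Bochner_Integration.integrable_bound[OF _ Fm], intro AE_I2)
    fix \<zeta>
    show "norm (F \<zeta>) \<le> norm (B * (\<Prod>x\<in>I. g (\<zeta> x)))" using F0[of \<zeta>] Fb[of \<zeta>] by simp
  qed
qed

lemma update_section:
  fixes F :: "('b \<Rightarrow> real) \<Rightarrow> real" and g :: "real \<Rightarrow> real"
  assumes "finite I" and "i \<notin> I" and gi: "integrable lborel g" and g0: "\<And>y. 0 \<le> g y" and gb: "\<And>y. g y \<le> G"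
    and F0: "\<And>\<zeta>. 0 \<le> F \<zeta>" and Fm: "F \<in> borel_measurable (PiM (insert i I) (\<lambda>_. lborel))"
    and Fb: "\<And>\<zeta>. F \<zeta> \<le> B * (\<Prod>x\<in>insert i I. g (\<zeta> x))"
    and FD: "\<forall>\<zeta> \<xi>. (\<forall>x\<in>insert i I. \<zeta> x = \<xi> x) \<longrightarrow> F \<zeta> = F \<xi>"
  shows update_section_le: "F (\<zeta>(i := y)) \<le> B * (\<Prod>x\<in>I. g (\<zeta> x)) * g y"
    and integrable_update_section: "integrable lborel (\<lambda>y. F (\<zeta>(i := y)))"
    and bdd_above_update_section: "bdd_above (range (\<lambda>y. F (\<zeta>(i := y))))"
proof -
  let ?P = "\<Prod>x\<in>I. g (\<zeta> x)"
  have P0: "0 \<le> ?P" using g0 by (simp add: prod_nonneg)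
  show le: "F (\<zeta>(i := y)) \<le> B * ?P * g y" for y
  proof -
    have "(\<Prod>x\<in>I. g ((\<zeta>(i := y)) x)) = ?P"
      using \<open>i \<notin> I\<close> by (intro prod.cong) auto
    then show ?thesis using Fb[of "\<zeta>(i := y)"] \<open>finite I\<close> \<open>i \<notin> I\<close> by (simp add: algebra_simps fun_upd_def)
  qed
  have "restrict \<zeta> I \<in> space (PiM I (\<lambda>_. lborel))" by (simp add: space_PiM)
  then have "(\<lambda>y. F ((restrict \<zeta> I)(i := y))) \<in> borel_measurable lborel"
    using measurable_compose[OF measurable_component_update[OF _ \<open>i \<notin> I\<close>] Fm] by (simp add: fun_upd_def)
  \<comment> \<open>\<open>F\<close> ignores the coordinates outside \<open>insert i I\<close>, so \<open>\<zeta>\<close> may be replaced by a point of the product space\<close>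
  moreover have "(\<lambda>y. F (\<zeta>(i := y))) = (\<lambda>y. F ((restrict \<zeta> I)(i := y)))"
    by (rule ext, rule FD[rule_format]) auto
  ultimately have "(\<lambda>y. F (\<zeta>(i := y))) \<in> borel_measurable lborel" by simp
  moreover have "norm (F (\<zeta>(i := y))) \<le> norm (B * ?P * g y)" for y
    using le[of y] F0[of "\<zeta>(i := y)"] by simp
  ultimately show "integrable lborel (\<lambda>y. F (\<zeta>(i := y)))"
    using gi by (auto intro: Bochner_Integration.integrable_bound[of _ "\<lambda>y. B * ?P * g y"])
  show "bdd_above (range (\<lambda>y. F (\<zeta>(i := y))))"
  proof (rule bdd_aboveI2)
    fix y
    have "F (\<zeta>(i := y)) \<le> B * ?P * g y" by (rule le)
    also have "\<dots> \<le> \<bar>B\<bar> * ?P * g y" using P0 g0[of y] by (intro mult_right_mono) auto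
    also have "\<dots> \<le> \<bar>B\<bar> * ?P * G" using P0 gb[of y] by (intro mult_left_mono) auto
    finally show "F (\<zeta>(i := y)) \<le> \<bar>B\<bar> * ?P * G" .
  qed
qed

lemma measurable_integral_update:
  fixes F :: "('b \<Rightarrow> real) \<Rightarrow> real"
  assumes "i \<notin> I" and Fm: "F \<in> borel_measurable (PiM (insert i I) (\<lambda>_. lborel))"
  shows "(\<lambda>\<zeta>. \<integral>y. F (\<zeta>(i := y)) \<partial>lborel) \<in> borel_measurable (PiM I (\<lambda>_. lborel))"
proof -
  have "(\<lambda>(\<zeta>, y). F (\<zeta>(i := y))) \<in> borel_measurable (PiM I (\<lambda>_. lborel) \<Otimes>\<^sub>M lborel)"
    using measurable_compose[OF measurable_add_dim[of i I "\<lambda>_. lborel"] Fm]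
    by (simp add: case_prod_beta')
  then show ?thesis
    by (rule lborel.borel_measurable_lebesgue_integral[of "\<lambda>\<zeta> y. F (\<zeta>(i := y))", simplified])
qed

theorem prekopa_marginal_log_concave:
  fixes H :: "('a \<Rightarrow> real) \<Rightarrow> ('b \<Rightarrow> real) \<Rightarrow> real" and I :: "'b set" and g :: "real \<Rightarrow> real"
  assumes "finite I" and gi: "integrable lborel g" and g0: "\<And>y. 0 \<le> g y" and gb: "\<And>y. g y \<le> G"
    and "\<And>\<phi> \<zeta>. 0 \<le> H \<phi> \<zeta>" and "\<And>\<phi>. H \<phi> \<in> borel_measurable (PiM I (\<lambda>_. lborel))"
    and "\<And>\<phi> \<zeta>. H \<phi> \<zeta> \<le> B * (\<Prod>x\<in>I. g (\<zeta> x))"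
    and "depends_only_on I H" and "jointly_log_concave H"
    and a: "0 < a" "a < 1"
  shows "(\<integral>\<zeta>. H \<phi> \<zeta> \<partial>PiM I (\<lambda>_. lborel)) powr a * (\<integral>\<zeta>. H \<psi> \<zeta> \<partial>PiM I (\<lambda>_. lborel)) powr (1 - a)
      \<le> (\<integral>\<zeta>. H (\<lambda>x. a * \<phi> x + (1 - a) * \<psi> x) \<zeta> \<partial>PiM I (\<lambda>_. lborel))"
  using assms(1,5-9)
proof (induction I arbitrary: H B \<phi> \<psi> rule: finite_induct)
  case empty
  let ?U = "(\<lambda>_. undefined) :: 'b \<Rightarrow> real"
  have "H \<phi> ?U powr a * H \<psi> ?U powr (1 - a)
      \<le> H (\<lambda>x. a * \<phi> x + (1 - a) * \<psi> x) (\<lambda>x. a * ?U x + (1 - a) * ?U x)"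
    using jointly_log_concaveD[OF empty.prems(5) a] .
  also have "\<dots> = H (\<lambda>x. a * \<phi> x + (1 - a) * \<psi> x) ?U"
    using empty.prems(4) unfolding depends_only_on_def by blast
  finally show ?case by (simp add: PiM_empty lebesgue_integral_count_space_finite)
next
  case (insert i I)
  interpret product_sigma_finite "\<lambda>_::'b. lborel" by standard
  note H0 = insert.prems(1) and Hm = insert.prems(2) and Hb = insert.prems(3)
    and HD = insert.prems(4) and HL = insert.prems(5)
  define H' where "H' = (\<lambda>\<phi> \<zeta>. \<integral>y. H \<phi> (\<zeta>(i := y)) \<partial>lborel)"
  note slice = update_section[OF insert.hyps gi g0 gb H0 Hm Hb HD[unfolded depends_only_on_def, THEN spec]]
  have H'L: "jointly_log_concave H'"
    unfolding H'_def by (rule jointly_log_concave_integral_update[OF HL H0 slice(2,3)])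
  have H'D: "depends_only_on I H'"
    unfolding depends_only_on_def H'_def
  proof (intro allI impI)
    fix \<phi> and \<zeta> \<xi> :: "'b \<Rightarrow> real" assume "\<forall>x\<in>I. \<zeta> x = \<xi> x"
    then have "H \<phi> (\<zeta>(i := y)) = H \<phi> (\<xi>(i := y))" for y
      by (intro HD[unfolded depends_only_on_def, rule_format]) auto
    then show "(\<integral>y. H \<phi> (\<zeta>(i := y)) \<partial>lborel) = (\<integral>y. H \<phi> (\<xi>(i := y)) \<partial>lborel)" by simp
  qed
  have H'b: "H' \<phi> \<zeta> \<le> (B * (\<integral>y. g y \<partial>lborel)) * (\<Prod>x\<in>I. g (\<zeta> x))" for \<phi> \<zeta>
  proof -
    have "H' \<phi> \<zeta> \<le> (\<integral>y. B * (\<Prod>x\<in>I. g (\<zeta> x)) * g y \<partial>lborel)"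
      unfolding H'_def using slice(1,2) gi by (intro integral_mono) auto
    then show ?thesis by (simp add: mult_ac)
  qed
  have H'0: "0 \<le> H' \<phi> \<zeta>" for \<phi> \<zeta> unfolding H'_def using H0 by (auto intro: integral_nonneg_AE)
  have H'm: "H' \<phi> \<in> borel_measurable (PiM I (\<lambda>_. lborel))" for \<phi>
    unfolding H'_def by (rule measurable_integral_update[OF insert.hyps(2) Hm[of \<phi>]])
  have IH: "(\<integral>\<zeta>. H' \<phi> \<zeta> \<partial>PiM I (\<lambda>_. lborel)) powr a * (\<integral>\<zeta>. H' \<psi> \<zeta> \<partial>PiM I (\<lambda>_. lborel)) powr (1 - a)
      \<le> (\<integral>\<zeta>. H' (\<lambda>x. a * \<phi> x + (1 - a) * \<psi> x) \<zeta> \<partial>PiM I (\<lambda>_. lborel))"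
    by (rule insert.IH[OF H'0 H'm H'b H'D H'L])
  have "(\<integral>\<zeta>. H \<phi>' \<zeta> \<partial>PiM (insert i I) (\<lambda>_. lborel)) = (\<integral>\<zeta>. H' \<phi>' \<zeta> \<partial>PiM I (\<lambda>_. lborel))" for \<phi>'
  proof -
    have "integrable (PiM (insert i I) (\<lambda>_. lborel)) (H \<phi>')"
      using insert.hyps gi H0 Hm Hb by (intro integrable_PiM_bounded_by_product[where B=B and g=g]) auto
    then show ?thesis unfolding H'_def using insert.hyps by (simp add: product_integral_insert)
  qed
  then show ?case using IH by simp
qed

lemma abs_difference_quotient_le:
  fixes f f' :: "real \<Rightarrow> real"
  assumes der: "\<And>s. (f has_real_derivative f' s) (at s)" and bd: "\<And>s. \<bar>f' s\<bar> \<le> w" and "x \<noteq> y"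
  shows "\<bar>(f x - f y) / (x - y)\<bar> \<le> w"
proof -
  obtain z where z: "f x - f y = (x - y) * f' z"
  proof (cases "x < y")
    case True
    from MVT2[OF True, of f f'] der obtain z where "f y - f x = (y - x) * f' z" by blast
    then show ?thesis using that[of z] by (simp add: algebra_simps)
  next
    case False
    then have "y < x" using \<open>x \<noteq> y\<close> by auto
    from MVT2[OF this, of f f'] der obtain z where "f x - f y = (x - y) * f' z" by blast
    then show ?thesis using that[of z] by simp
  qed
  then show ?thesis using bd[of z] \<open>x \<noteq> y\<close> by simp
qed

lemma has_real_derivative_integral_dominated:
  fixes f f' :: "real \<Rightarrow> 'a \<Rightarrow> real" and w :: "'a \<Rightarrow> real"
  assumes fi: "\<And>s. integrable M (f s)" and f'm: "f' s0 \<in> borel_measurable M" and wi: "integrable M w"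
    and der: "\<And>s x. x \<in> space M \<Longrightarrow> ((\<lambda>s. f s x) has_real_derivative f' s x) (at s)"
    and bd: "\<And>s x. x \<in> space M \<Longrightarrow> \<bar>f' s x\<bar> \<le> w x"
  shows "((\<lambda>s. \<integral>x. f s x \<partial>M) has_real_derivative (\<integral>x. f' s0 x \<partial>M)) (at s0)"
  unfolding has_field_derivative_iff tendsto_at_iff_sequentially
proof (intro allI impI)
  fix X :: "nat \<Rightarrow> real" assume X: "\<forall>i. X i \<in> UNIV - {s0}" and Xl: "X \<longlonglongrightarrow> s0"
  define q where "q = (\<lambda>n x. (f (X n) x - f s0 x) / (X n - s0))"
  have eq: "((\<lambda>y. ((\<integral>x. f y x \<partial>M) - (\<integral>x. f s0 x \<partial>M)) / (y - s0)) \<circ> X) n = (\<integral>x. q n x \<partial>M)" for n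
    unfolding q_def comp_def using fi by (simp add: integral_diff)
  have "(\<lambda>n. \<integral>x. q n x \<partial>M) \<longlonglongrightarrow> (\<integral>x. f' s0 x \<partial>M)"
  proof (rule integral_dominated_convergence[OF f'm _ wi])
    show "\<And>n. q n \<in> borel_measurable M" unfolding q_def using fi by auto
    show "AE x in M. (\<lambda>n. q n x) \<longlonglongrightarrow> f' s0 x"
    proof (intro AE_I2)
      fix x assume x: "x \<in> space M"
      have "((\<lambda>y. (f y x - f s0 x) / (y - s0)) \<longlongrightarrow> f' s0 x) (at s0)"
        using der[OF x, of s0] unfolding has_field_derivative_iff .
      then show "(\<lambda>n. q n x) \<longlonglongrightarrow> f' s0 x"
        unfolding tendsto_at_iff_sequentially q_def using X Xl by (auto simp: comp_def)
    qed
    show "AE x in M. norm (q n x) \<le> w x" for n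
    proof (intro AE_I2)
      fix x assume x: "x \<in> space M"
      show "norm (q n x) \<le> w x"
        unfolding q_def real_norm_def
        by (rule abs_difference_quotient_le[where f="\<lambda>s. f s x" and f'="\<lambda>s. f' s x"])
          (use der[OF x] bd[OF x] X in auto)
    qed
  qed
  then show "((\<lambda>y. ((\<integral>x. f y x \<partial>M) - (\<integral>x. f s0 x \<partial>M)) / (y - s0)) \<circ> X) \<longlonglongrightarrow> (\<integral>x. f' s0 x \<partial>M)"
    unfolding eq .
qed

lemma convex_on_second_derivative_nonneg:
  fixes g g' :: "real \<Rightarrow> real"
  assumes cv: "convex_on UNIV g" and d: "\<And>s. (g has_real_derivative g' s) (at s)"
    and d2: "(g' has_real_derivative D) (at x)"
  shows "0 \<le> D"
proof -
  have tan: "g' u * (v - u) \<le> g v - g u" for u v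
    by (rule convex_on_imp_above_tangent[OF cv]) (use d in auto)
  have "(g' y - g' x) / (y - x) \<ge> 0" if "y \<noteq> x" for y
  proof -
    have "(g' y - g' x) * (y - x) \<ge> 0" using tan[of x y] tan[of y x] by (simp add: algebra_simps)
    then show ?thesis using that by (simp add: zero_le_divide_iff zero_le_mult_iff)
  qed
  then have "eventually (\<lambda>y. (g' y - g' x) / (y - x) \<ge> 0) (at x)"
    unfolding eventually_at_filter by auto
  moreover have "((\<lambda>y. (g' y - g' x) / (y - x)) \<longlongrightarrow> D) (at x)"
    using d2 unfolding has_field_derivative_iff .
  ultimately show ?thesis by (intro tendsto_lowerbound) auto
qed

lemma integral_pos_if_pos:
  fixes f :: "'a \<Rightarrow> real"
  assumes fi: "integrable M f" and fp: "\<And>x. 0 < f x" and sp: "emeasure M (space M) \<noteq> 0"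
  shows "0 < (\<integral>x. f x \<partial>M)"
proof -
  have "0 \<le> (\<integral>x. f x \<partial>M)" using fp by (auto intro: integral_nonneg_AE less_imp_le)
  moreover have "(\<integral>x. f x \<partial>M) \<noteq> 0"
  proof
    assume "(\<integral>x. f x \<partial>M) = 0"
    then have "AE x in M. f x = 0" using integral_nonneg_eq_0_iff_AE[OF fi] fp
      by (simp add: less_imp_le)
    then have "AE x in M. False" by eventually_elim (use fp in \<open>simp add: less_le\<close>)
    then show False using sp by (simp add: AE_iff_measurable[OF _ refl])
  qed
  ultimately show ?thesis by simp
qed

lemma integrable_exp_neg_square:
  fixes k :: real assumes k: "0 < k"
  shows "integrable lborel (\<lambda>y. exp (- k * y\<^sup>2))"
proof -
  define s where "s = sqrt (1 / (2 * k))"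
  have s: "0 < s" "s\<^sup>2 = 1 / (2 * k)" unfolding s_def using k by auto
  have "(\<lambda>y. exp (- k * y\<^sup>2)) = (\<lambda>y. sqrt (2 * pi * s\<^sup>2) * normal_density 0 s y)"
  proof
    fix y
    have "- (y - 0)\<^sup>2 / (2 * s\<^sup>2) = - k * y\<^sup>2" using s k by (simp add: field_simps)
    then show "exp (- k * y\<^sup>2) = sqrt (2 * pi * s\<^sup>2) * normal_density 0 s y"
      unfolding normal_density_def using s k by simp
  qed
  then show ?thesis using integrable_normal_density[OF s(1), of 0] by simp
qed

lemma mult_exp_neg_le_1: "0 \<le> u \<Longrightarrow> u * exp (- u) \<le> (1::real)"
proof -
  have "u \<le> exp u" using exp_ge_add_one_self[of u] by linarith
  then show ?thesis by (simp add: exp_minus field_simps)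
qed

lemma power2_mult_exp_neg_le_4: "0 \<le> u \<Longrightarrow> u\<^sup>2 * exp (- u) \<le> (4::real)"
proof -
  assume u: "0 \<le> u"
  have "u / 2 \<le> exp (u / 2)" using exp_ge_add_one_self[of "u/2"] by linarith
  then have "(u / 2)\<^sup>2 \<le> (exp (u / 2))\<^sup>2" using u by (intro power_mono) auto
  also have "(exp (u / 2))\<^sup>2 = exp u" by (simp add: power2_eq_square exp_add[symmetric])
  finally show ?thesis by (simp add: power_divide exp_minus field_simps)
qed

section \<open>The lattice Laplacian and the precision form\<close>

definition torus_shift :: "nat \<Rightarrow> nat \<times> nat \<Rightarrow> site \<Rightarrow> site" where
  "torus_shift N d x = ((fst x + fst d) mod N, (snd x + snd d) mod N)"

lemma finite_sites: "finite (sites N)"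
  unfolding sites_def by simp

lemma torus_shift_in_sites: "0 < N \<Longrightarrow> torus_shift N d x \<in> sites N"
  unfolding torus_shift_def sites_def by auto

lemma mod_add_right_inj:
  fixes i j p N :: nat
  assumes "i < N" "j < N" "(i + p) mod N = (j + p) mod N"
  shows "i = j"
proof -
  have "(int i + int p) mod int N = (int j + int p) mod int N"
    using assms(3) by (metis of_nat_add zmod_int)
  then have "(int i + int p - int p) mod int N = (int j + int p - int p) mod int N"
    by (rule mod_diff_cong) (rule refl)
  then have "int (i mod N) = int (j mod N)" by (simp add: zmod_int)
  then show ?thesis using assms(1,2) by simp
qed

lemma bij_betw_torus_shift: "bij_betw (torus_shift N d) (sites N) (sites N)"
proof (cases "N = 0")
  case True
  then show ?thesis by (simp add: sites_def bij_betw_def)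
next
  case False
  have "inj_on (torus_shift N d) (sites N)"
    by (rule inj_onI) (auto simp: torus_shift_def sites_def intro: mod_add_right_inj)
  moreover have "torus_shift N d ` sites N \<subseteq> sites N"
    using False by (intro image_subsetI torus_shift_in_sites) simp
  ultimately show ?thesis using finite_sites by (intro bij_betw_imageI endo_inj_surj)
qed

lemma lap_eq_torus_shifts:
  assumes "x \<in> sites N"
  shows "lap N f x = real N ^ 2 * ((f (torus_shift N (1, 0) x) - f x) + (f (torus_shift N (N - 1, 0) x) - f x)
    + (f (torus_shift N (0, 1) x) - f x) + (f (torus_shift N (0, N - 1) x) - f x))"
  using assms by (simp add: lap_def nbrs_def torus_shift_def sites_def mem_Times_iff algebra_simps)

lemma sum_mult_diff_bij_nonneg:
  fixes \<zeta> :: "'a \<Rightarrow> real"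
  assumes "bij_betw \<sigma> S S"
  shows "0 \<le> (\<Sum>x\<in>S. \<zeta> x * (\<zeta> x - \<zeta> (\<sigma> x)))"
proof -
  have "(\<Sum>x\<in>S. \<zeta> x * (\<zeta> x - \<zeta> (\<sigma> x)))
      = (\<Sum>x\<in>S. ((\<zeta> x - \<zeta> (\<sigma> x))\<^sup>2 + ((\<zeta> x)\<^sup>2 - (\<zeta> (\<sigma> x))\<^sup>2)) / 2)"
    by (rule sum.cong) (auto simp: power2_eq_square field_simps)
  also have "\<dots> = ((\<Sum>x\<in>S. (\<zeta> x - \<zeta> (\<sigma> x))\<^sup>2) + ((\<Sum>x\<in>S. (\<zeta> x)\<^sup>2) - (\<Sum>x\<in>S. (\<zeta> (\<sigma> x))\<^sup>2))) / 2"
    by (simp only: sum_divide_distrib[symmetric] sum.distrib sum_subtractf)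
  also have "(\<Sum>x\<in>S. (\<zeta> (\<sigma> x))\<^sup>2) = (\<Sum>x\<in>S. (\<zeta> x)\<^sup>2)"
    using sum.reindex_bij_betw[OF assms, of "\<lambda>y. (\<zeta> y)\<^sup>2"] .
  finally have "(\<Sum>x\<in>S. \<zeta> x * (\<zeta> x - \<zeta> (\<sigma> x))) = (\<Sum>x\<in>S. (\<zeta> x - \<zeta> (\<sigma> x))\<^sup>2) / 2"
    by simp
  moreover have "0 \<le> (\<Sum>x\<in>S. (\<zeta> x - \<zeta> (\<sigma> x))\<^sup>2)" by (simp add: sum_nonneg)
  ultimately show ?thesis by linarith
qed

lemma sum_mult_neg_lap_nonneg: "0 \<le> (\<Sum>x\<in>sites N. \<zeta> x * (- lap N \<zeta> x))"
proof -
  let ?S = "\<lambda>d. \<Sum>x\<in>sites N. \<zeta> x * (\<zeta> x - \<zeta> (torus_shift N d x))"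
  have "(\<Sum>x\<in>sites N. \<zeta> x * (- lap N \<zeta> x))
      = real N ^ 2 * (?S (1, 0) + ?S (N - 1, 0) + ?S (0, 1) + ?S (0, N - 1))"
    by (simp add: lap_eq_torus_shifts sum.distrib[symmetric] sum_distrib_left algebra_simps cong: sum.cong)
  also have "\<dots> \<ge> 0"
    using sum_mult_diff_bij_nonneg[OF bij_betw_torus_shift] by (intro mult_nonneg_nonneg add_nonneg_nonneg) auto
  finally show ?thesis .
qed

lemma prec_form_eq:
  "prec_form N m t \<zeta>
    = (1 / real N)^2 * ((\<Sum>x\<in>sites N. \<zeta> x * (- lap N \<zeta> x)) + (m^2 + 1/t) * (\<Sum>x\<in>sites N. (\<zeta> x)^2))"
proof -
  have "prec_form N m t \<zeta> = (1 / real N)^2 * (\<Sum>x\<in>sites N. \<zeta> x * (- lap N \<zeta> x) + (m^2 + 1/t) * (\<zeta> x)^2)"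
    unfolding prec_form_def lat_int_def
    by (rule arg_cong[where f="\<lambda>s. (1 / real N)^2 * s"], rule sum.cong) (auto simp: power2_eq_square algebra_simps)
  then show ?thesis by (simp only: sum.distrib sum_distrib_left[symmetric])
qed

lemma prec_form_lower_bound:
  assumes "0 < t"
  shows "(1 / real N)^2 * (m^2 + 1/t) * (\<Sum>x\<in>sites N. (\<zeta> x)^2) \<le> prec_form N m t \<zeta>"
  unfolding prec_form_eq using sum_mult_neg_lap_nonneg[where N=N and \<zeta>=\<zeta>]
  by (simp add: algebra_simps mult_left_mono)

lemma lap_linear: "lap N (\<lambda>x. a * \<zeta> x + b * \<xi> x) y = a * lap N \<zeta> y + b * lap N \<xi> y"
  by (simp add: lap_def nbrs_def algebra_simps)

lemma lap_diff: "lap N (\<lambda>x. \<zeta> x - \<xi> x) y = lap N \<zeta> y - lap N \<xi> y"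
  by (simp add: lap_def nbrs_def algebra_simps)

lemma prec_form_convex:
  assumes t: "0 < t" and a: "0 \<le> a" "a \<le> 1"
  shows "prec_form N m t (\<lambda>x. a * \<zeta> x + (1 - a) * \<xi> x) \<le> a * prec_form N m t \<zeta> + (1 - a) * prec_form N m t \<xi>"
proof -
  define \<mu> where "\<mu> = m^2 + 1/t"
  define L where "L = (\<lambda>\<zeta> x. - lap N \<zeta> x + \<mu> * \<zeta> x)"
  have P: "prec_form N m t \<eta> = (1 / real N)^2 * (\<Sum>x\<in>sites N. \<eta> x * L \<eta> x)" for \<eta>
    unfolding prec_form_def lat_int_def L_def \<mu>_def by simp
  \<comment> \<open>the defect of convexity of a quadratic form is \<open>a (1 - a)\<close> times its value at \<open>\<zeta> - \<xi>\<close>\<close>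
  have pt: "a * (\<zeta> x * L \<zeta> x) + (1 - a) * (\<xi> x * L \<xi> x)
      - (a * \<zeta> x + (1 - a) * \<xi> x) * L (\<lambda>x. a * \<zeta> x + (1 - a) * \<xi> x) x
      = a * (1 - a) * ((\<zeta> x - \<xi> x) * L (\<lambda>x. \<zeta> x - \<xi> x) x)" for x
    unfolding L_def lap_linear lap_diff by (simp add: algebra_simps)
  have "a * prec_form N m t \<zeta> + (1 - a) * prec_form N m t \<xi> - prec_form N m t (\<lambda>x. a * \<zeta> x + (1 - a) * \<xi> x)
      = (1 / real N)^2 * (\<Sum>x\<in>sites N. a * (\<zeta> x * L \<zeta> x) + (1 - a) * (\<xi> x * L \<xi> x)
      - (a * \<zeta> x + (1 - a) * \<xi> x) * L (\<lambda>x. a * \<zeta> x + (1 - a) * \<xi> x) x)"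
    unfolding P by (simp add: sum_subtractf sum.distrib sum_distrib_left algebra_simps)
  also have "\<dots> = a * (1 - a) * prec_form N m t (\<lambda>x. \<zeta> x - \<xi> x)"
    unfolding pt P by (simp add: sum_distrib_left algebra_simps)
  also have "\<dots> \<ge> 0"
  proof -
    have "0 \<le> (1 / real N)^2 * (m^2 + 1/t) * (\<Sum>x\<in>sites N. (\<zeta> x - \<xi> x)^2)"
      using t by (intro mult_nonneg_nonneg sum_nonneg) auto
    then show ?thesis using prec_form_lower_bound[OF t, of N m "\<lambda>x. \<zeta> x - \<xi> x"] a by simp
  qed
  finally show ?thesis by simp
qed

lemma prec_form_depends_on_sites:
  assumes "\<forall>x\<in>sites N. \<zeta> x = \<xi> x"
  shows "prec_form N m t \<zeta> = prec_form N m t \<xi>"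
proof -
  have "lap N \<zeta> x = lap N \<xi> x" if x: "x \<in> sites N" for x
  proof -
    have "0 < N" using x by (auto simp: sites_def)
    then show ?thesis using x by (simp add: lap_eq_torus_shifts[OF x] assms torus_shift_in_sites)
  qed
  then show ?thesis unfolding prec_form_def lat_int_def using assms by (intro arg_cong[where f="\<lambda>s. _ * s"] sum.cong) auto
qed

lemma Vpot_pos: "0 < Vpot E \<beta> s"
  by (cases E) (auto simp: Vpot_def)

lemma exp_convex_combination:
  fixes a x y :: real
  assumes "0 \<le> a" "a \<le> 1"
  shows "exp (a * x + (1 - a) * y) \<le> a * exp x + (1 - a) * exp y"
  using convex_onD[OF exp_convex, of a y x] assms by (simp add: algebra_simps)

lemma Vpot_convex:
  assumes a: "0 \<le> a" "a \<le> 1"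
  shows "Vpot E \<beta> (a * s1 + (1 - a) * s2) \<le> a * Vpot E \<beta> s1 + (1 - a) * Vpot E \<beta> s2"
proof -
  have "exp (c * (a * s1 + (1 - a) * s2)) \<le> a * exp (c * s1) + (1 - a) * exp (c * s2)" for c
    using exp_convex_combination[OF a, of "c * s1" "c * s2"] by (simp add: algebra_simps)
  from this[of "sqrt \<beta>"] this[of "- sqrt \<beta>"] show ?thesis
    by (cases E) (simp_all add: Vpot_def cosh_field_def field_simps)
qed

lemma v0_nonneg: "0 \<le> lam \<Longrightarrow> 0 \<le> v0 N lam \<beta> E \<phi>"
  unfolding v0_def lat_int_def using Vpot_pos by (intro mult_nonneg_nonneg sum_nonneg) (auto intro: less_imp_le)

definition v0_coeff :: "nat \<Rightarrow> real \<Rightarrow> real \<Rightarrow> real" where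
  "v0_coeff N lam \<beta> = lam * (1 / real N)^2 * (1 / real N) powr (\<beta> / (4 * pi))"

lemma v0_coeff_nonneg: "0 \<le> lam \<Longrightarrow> 0 \<le> v0_coeff N lam \<beta>"
  unfolding v0_coeff_def by simp

lemma v0_eq_sum: "v0 N lam \<beta> E \<psi> = v0_coeff N lam \<beta> * (\<Sum>x\<in>sites N. Vpot E \<beta> (\<psi> x))"
  unfolding v0_def lat_int_def v0_coeff_def sum_distrib_left[symmetric] by (simp add: algebra_simps)

lemma v0_convex:
  assumes lam: "0 \<le> lam" and a: "0 \<le> a" "a \<le> 1"
  shows "v0 N lam \<beta> E (\<lambda>x. a * \<phi> x + (1 - a) * \<psi> x) \<le> a * v0 N lam \<beta> E \<phi> + (1 - a) * v0 N lam \<beta> E \<psi>"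
proof -
  have "(\<Sum>x\<in>sites N. Vpot E \<beta> (a * \<phi> x + (1 - a) * \<psi> x))
      \<le> a * (\<Sum>x\<in>sites N. Vpot E \<beta> (\<phi> x)) + (1 - a) * (\<Sum>x\<in>sites N. Vpot E \<beta> (\<psi> x))"
    unfolding sum_distrib_left sum.distrib[symmetric] by (intro sum_mono Vpot_convex[OF a])
  from mult_left_mono[OF this v0_coeff_nonneg[OF lam]] show ?thesis
    unfolding v0_eq_sum by (simp add: algebra_simps)
qed

definition gibbs_weight :: "nat \<Rightarrow> real \<Rightarrow> real \<Rightarrow> real \<Rightarrow> model \<Rightarrow> real \<Rightarrow> field \<Rightarrow> field \<Rightarrow> real" where
  "gibbs_weight N m lam \<beta> E t \<phi> \<zeta> = exp (- v0 N lam \<beta> E (\<lambda>x. \<phi> x + \<zeta> x)) * exp (- prec_form N m t \<zeta> / 2)"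

lemma gibbs_weight_pos: "0 < gibbs_weight N m lam \<beta> E t \<phi> \<zeta>"
  by (simp add: gibbs_weight_def)

lemma gibbs_weight_jointly_log_concave:
  assumes lam: "0 \<le> lam" and t: "0 < t"
  shows "jointly_log_concave (gibbs_weight N m lam \<beta> E t)"
  unfolding jointly_log_concave_def
proof (intro allI impI)
  fix \<phi> \<psi> \<zeta> \<xi> :: field and a :: real assume a: "0 < a \<and> a < 1"
  define W where "W = (\<lambda>\<phi> \<zeta>. v0 N lam \<beta> E (\<lambda>x. \<phi> x + \<zeta> x) + prec_form N m t \<zeta> / 2)"
  have HW: "gibbs_weight N m lam \<beta> E t \<phi>' \<zeta>' = exp (- W \<phi>' \<zeta>')" for \<phi>' \<zeta>'
    unfolding gibbs_weight_def W_def by (simp add: exp_add[symmetric] diff_divide_distrib)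
  have "(\<lambda>x. (a * \<phi> x + (1 - a) * \<psi> x) + (a * \<zeta> x + (1 - a) * \<xi> x))
      = (\<lambda>x. a * (\<phi> x + \<zeta> x) + (1 - a) * (\<psi> x + \<xi> x))" by (simp add: algebra_simps)
  then have "W (\<lambda>x. a * \<phi> x + (1 - a) * \<psi> x) (\<lambda>x. a * \<zeta> x + (1 - a) * \<xi> x) \<le> a * W \<phi> \<zeta> + (1 - a) * W \<psi> \<xi>"
    using v0_convex[OF lam, of a N \<beta> E "\<lambda>x. \<phi> x + \<zeta> x" "\<lambda>x. \<psi> x + \<xi> x"]
      prec_form_convex[OF t, of a N m \<zeta> \<xi>] a
    unfolding W_def by (simp add: field_simps)
  then show "gibbs_weight N m lam \<beta> E t \<phi> \<zeta> powr a * gibbs_weight N m lam \<beta> E t \<psi> \<xi> powr (1 - a)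
      \<le> gibbs_weight N m lam \<beta> E t (\<lambda>x. a * \<phi> x + (1 - a) * \<psi> x) (\<lambda>x. a * \<zeta> x + (1 - a) * \<xi> x)"
    unfolding HW exp_powr_real exp_add[symmetric] by (simp add: algebra_simps)
qed

lemma gibbs_weight_depends_only_on_sites: "depends_only_on (sites N) (gibbs_weight N m lam \<beta> E t)"
  unfolding depends_only_on_def gibbs_weight_def v0_def lat_int_def
  by (auto dest: prec_form_depends_on_sites[where m=m and t=t])

lemma measurable_component_PiM_lborel[measurable]:
  "(\<lambda>\<zeta>. \<zeta> y) \<in> borel_measurable (PiM I (\<lambda>_. lborel :: real measure))"
proof (cases "y \<in> I")
  case True
  then show ?thesis using measurable_component_singleton[OF True, of "\<lambda>_. lborel"] by simp
next
  case False
  \<comment> \<open>outside \<open>I\<close> the points of the product space all take the value \<open>undefined\<close>\<close>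
  then have "\<zeta> y = undefined" if "\<zeta> \<in> space (PiM I (\<lambda>_. lborel :: real measure))" for \<zeta>
    using that unfolding space_PiM PiE_def extensional_def by blast
  then show ?thesis by (subst measurable_cong[where g="\<lambda>_. undefined"]) auto
qed

lemma measurable_lap[measurable]: "(\<lambda>\<zeta>. lap N \<zeta> x) \<in> borel_measurable (PiM I (\<lambda>_. lborel))"
  unfolding lap_def nbrs_def list.map sum_list.Cons sum_list.Nil by measurable

lemma measurable_prec_form[measurable]: "prec_form N m t \<in> borel_measurable (PiM I (\<lambda>_. lborel))"
  unfolding prec_form_def[abs_def] lat_int_def by measurable

lemma measurable_Vpot[measurable]: "Vpot E \<beta> \<in> borel_measurable borel"
  unfolding Vpot_def by (cases E) (auto intro!: borel_measurable_continuous_onI continuous_intros)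

lemma measurable_gibbs_weight[measurable]:
  "gibbs_weight N m lam \<beta> E t \<phi> \<in> borel_measurable (PiM I (\<lambda>_. lborel))"
  unfolding gibbs_weight_def[abs_def] v0_def lat_int_def by measurable

section \<open>Convexity of the effective potential\<close>

definition gauss_rate :: "nat \<Rightarrow> real \<Rightarrow> real \<Rightarrow> real" where
  "gauss_rate N m t = (1 / real N)^2 * (m^2 + 1/t) / 2"

lemma gauss_rate_pos: "1 \<le> N \<Longrightarrow> 0 < t \<Longrightarrow> 0 < gauss_rate N m t"
  unfolding gauss_rate_def by (simp add: add_nonneg_pos)

lemma exp_neg_prec_form_le_prod:
  assumes "0 < t"
  shows "exp (- prec_form N m t \<zeta> / 2) \<le> (\<Prod>x\<in>sites N. exp (- gauss_rate N m t * (\<zeta> x)^2))"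
proof -
  have "(\<Prod>x\<in>sites N. exp (- gauss_rate N m t * (\<zeta> x)^2)) = exp (- gauss_rate N m t * (\<Sum>x\<in>sites N. (\<zeta> x)^2))"
    using finite_sites by (simp add: exp_sum sum_distrib_left)
  also have "\<dots> = exp (- ((1 / real N)^2 * (m^2 + 1/t) * (\<Sum>x\<in>sites N. (\<zeta> x)^2)) / 2)"
    unfolding gauss_rate_def by simp
  finally have "(\<Prod>x\<in>sites N. exp (- gauss_rate N m t * (\<zeta> x)^2))
      = exp (- ((1 / real N)^2 * (m^2 + 1/t) * (\<Sum>x\<in>sites N. (\<zeta> x)^2)) / 2)" .
  then show ?thesis using prec_form_lower_bound[OF assms, of N m \<zeta>] by simp
qed

lemma gibbs_weight_le_prod:
  assumes "0 \<le> lam" and "0 < t"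
  shows "gibbs_weight N m lam \<beta> E t \<phi> \<zeta> \<le> (\<Prod>x\<in>sites N. exp (- gauss_rate N m t * (\<zeta> x)^2))"
proof -
  have "gibbs_weight N m lam \<beta> E t \<phi> \<zeta> \<le> exp (- prec_form N m t \<zeta> / 2)"
    unfolding gibbs_weight_def using v0_nonneg[OF assms(1)] by (simp add: mult_left_le_one_le)
  also have "\<dots> \<le> (\<Prod>x\<in>sites N. exp (- gauss_rate N m t * (\<zeta> x)^2))"
    by (rule exp_neg_prec_form_le_prod[OF assms(2)])
  finally show ?thesis .
qed

lemma integrable_exp_neg_prec_form:
  assumes "1 \<le> N" and "0 < t"
  shows "integrable (PiM (sites N) (\<lambda>_. lborel)) (\<lambda>\<zeta>. exp (- prec_form N m t \<zeta> / 2))"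
  using exp_neg_prec_form_le_prod[OF assms(2)] integrable_exp_neg_square[OF gauss_rate_pos[OF assms]]
  by (intro integrable_PiM_bounded_by_product[where B=1 and g="\<lambda>y. exp (- gauss_rate N m t * y\<^sup>2)"])
    (auto simp: finite_sites)

lemma integrable_gibbs_weight:
  assumes "1 \<le> N" and "0 \<le> lam" and "0 < t"
  shows "integrable (PiM (sites N) (\<lambda>_. lborel)) (gibbs_weight N m lam \<beta> E t \<phi>)"
  using gibbs_weight_le_prod[OF assms(2,3)] integrable_exp_neg_square[OF gauss_rate_pos[OF assms(1,3)]]
  by (intro integrable_PiM_bounded_by_product[where B=1 and g="\<lambda>y. exp (- gauss_rate N m t * y\<^sup>2)"])
    (auto simp: finite_sites less_imp_le gibbs_weight_pos)

lemma emeasure_space_PiM_sites_nonzero: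
  "emeasure (PiM (sites N) (\<lambda>_. lborel :: real measure)) (space (PiM (sites N) (\<lambda>_. lborel))) \<noteq> 0"
proof -
  interpret product_sigma_finite "\<lambda>_::site. lborel :: real measure" by standard
  have "emeasure (PiM (sites N) (\<lambda>_. lborel :: real measure)) (PiE (sites N) (\<lambda>_. {0..1})) = 1"
    using finite_sites by (subst emeasure_PiM) auto
  then have "1 \<le> emeasure (PiM (sites N) (\<lambda>_. lborel :: real measure)) (space (PiM (sites N) (\<lambda>_. lborel)))"
    by (metis emeasure_space)
  then show ?thesis by auto
qed

lemma integral_exp_neg_prec_form_pos:
  assumes "1 \<le> N" and "0 < t"
  shows "0 < (\<integral>\<zeta>. exp (- prec_form N m t \<zeta> / 2) \<partial>PiM (sites N) (\<lambda>_. lborel))"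
  by (rule integral_pos_if_pos[OF integrable_exp_neg_prec_form[OF assms] _ emeasure_space_PiM_sites_nonzero]) simp

lemma integral_gibbs_weight_pos:
  assumes "1 \<le> N" and "0 \<le> lam" and "0 < t"
  shows "0 < (\<integral>\<zeta>. gibbs_weight N m lam \<beta> E t \<phi> \<zeta> \<partial>PiM (sites N) (\<lambda>_. lborel))"
  by (rule integral_pos_if_pos[OF integrable_gibbs_weight[OF assms] gibbs_weight_pos
        emeasure_space_PiM_sites_nonzero])

lemma integral_gibbs_weight_log_concave:
  assumes N: "1 \<le> N" and lam: "0 \<le> lam" and t: "0 < t" and a: "0 < a" "a < 1"
  shows "(\<integral>\<zeta>. gibbs_weight N m lam \<beta> E t \<phi> \<zeta> \<partial>PiM (sites N) (\<lambda>_. lborel)) powr a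
       * (\<integral>\<zeta>. gibbs_weight N m lam \<beta> E t \<psi> \<zeta> \<partial>PiM (sites N) (\<lambda>_. lborel)) powr (1 - a)
     \<le> (\<integral>\<zeta>. gibbs_weight N m lam \<beta> E t (\<lambda>x. a * \<phi> x + (1 - a) * \<psi> x) \<zeta> \<partial>PiM (sites N) (\<lambda>_. lborel))"
proof (rule prekopa_marginal_log_concave[where B=1 and G=1, OF finite_sites
      integrable_exp_neg_square[OF gauss_rate_pos[OF N t]] _ _ _ _ _
      gibbs_weight_depends_only_on_sites gibbs_weight_jointly_log_concave[OF lam t] a])
  show "exp (- gauss_rate N m t * y\<^sup>2) \<le> 1" for y
    using gauss_rate_pos[OF N t, of m] by simp
qed (use gibbs_weight_le_prod[OF lam t] gibbs_weight_pos in \<open>auto simp: less_imp_le\<close>)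

lemma vt_eq_ln_ratio:
  assumes "0 < t"
  shows "vt N m lam \<beta> E t \<phi> = - ln ((\<integral>\<zeta>. gibbs_weight N m lam \<beta> E t \<phi> \<zeta> \<partial>PiM (sites N) (\<lambda>_. lborel))
      / (\<integral>\<zeta>. exp (- prec_form N m t \<zeta> / 2) \<partial>PiM (sites N) (\<lambda>_. lborel)))"
  using assms unfolding vt_def gauss_exp_def gibbs_weight_def[abs_def] by simp

lemma vt_at_zero: "vt N m lam \<beta> E 0 \<phi> = v0 N lam \<beta> E \<phi>"
  unfolding vt_def gauss_exp_def by simp

theorem vt_convex:
  assumes N: "1 \<le> N" and lam: "0 \<le> lam" and t: "0 \<le> t" and a: "0 \<le> a" "a \<le> 1"
  shows "vt N m lam \<beta> E t (\<lambda>x. a * \<phi> x + (1 - a) * \<psi> x) \<le> a * vt N m lam \<beta> E t \<phi> + (1 - a) * vt N m lam \<beta> E t \<psi>"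
proof (cases "t = 0 \<or> a = 0 \<or> a = 1")
  case True
  then show ?thesis using v0_convex[OF lam a] by (auto simp: vt_at_zero)
next
  case False
  then have t: "0 < t" and a: "0 < a" "a < 1" using t a by auto
  define F where "F \<phi>' = (\<integral>\<zeta>. gibbs_weight N m lam \<beta> E t \<phi>' \<zeta> \<partial>PiM (sites N) (\<lambda>_. lborel))" for \<phi>'
  define Z where "Z = (\<integral>\<zeta>. exp (- prec_form N m t \<zeta> / 2) \<partial>PiM (sites N) (\<lambda>_. lborel))"
  have F: "0 < F \<phi>'" for \<phi>' unfolding F_def by (rule integral_gibbs_weight_pos[OF N lam t])
  have Z: "0 < Z" unfolding Z_def by (rule integral_exp_neg_prec_form_pos[OF N t])
  have vt: "vt N m lam \<beta> E t \<phi>' = ln Z - ln (F \<phi>')" for \<phi>'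
    using vt_eq_ln_ratio[OF t, of N m lam \<beta> E \<phi>'] F[of \<phi>'] Z by (simp add: ln_div F_def Z_def)
  have "a * ln (F \<phi>) + (1 - a) * ln (F \<psi>) = ln (F \<phi> powr a * F \<psi> powr (1 - a))"
    using F[of \<phi>] F[of \<psi>] by (simp add: ln_mult ln_powr)
  also have "\<dots> \<le> ln (F (\<lambda>x. a * \<phi> x + (1 - a) * \<psi> x))"
  proof -
    have "F \<phi> powr a * F \<psi> powr (1 - a) \<le> F (\<lambda>x. a * \<phi> x + (1 - a) * \<psi> x)"
      unfolding F_def by (rule integral_gibbs_weight_log_concave[OF N lam t a])
    then show ?thesis using F[of \<phi>] F[of \<psi>] F[of "\<lambda>x. a * \<phi> x + (1 - a) * \<psi> x"]
      by (subst ln_le_cancel_iff) auto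
  qed
  finally show ?thesis unfolding vt by (simp add: algebra_simps)
qed

section \<open>Differentiability along lines\<close>

definition dVpot :: "model \<Rightarrow> real \<Rightarrow> real \<Rightarrow> real" where
  "dVpot E \<beta> s = (case E of Lv \<Rightarrow> sqrt \<beta> * exp (sqrt \<beta> * s) | ShG \<Rightarrow> sqrt \<beta> * sinh (sqrt \<beta> * s))"

lemma has_real_derivative_Vpot: "(Vpot E \<beta> has_real_derivative dVpot E \<beta> s) (at s within S)"
  by (cases E) (auto simp: Vpot_def[abs_def] dVpot_def intro!: derivative_eq_intros)

lemma has_real_derivative_dVpot: "0 \<le> \<beta> \<Longrightarrow> (dVpot E \<beta> has_real_derivative \<beta> * Vpot E \<beta> s) (at s within S)"
  by (cases E) (auto simp: Vpot_def dVpot_def[abs_def] intro!: derivative_eq_intros)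

lemma has_real_derivative_Vpot_chain[derivative_intros]:
  "(f has_real_derivative f') (at x within S) \<Longrightarrow>
    ((\<lambda>s. Vpot E \<beta> (f s)) has_real_derivative dVpot E \<beta> (f x) * f') (at x within S)"
  by (rule DERIV_chain2[OF has_real_derivative_Vpot])

lemma has_real_derivative_dVpot_chain[derivative_intros]:
  "0 \<le> \<beta> \<Longrightarrow> (f has_real_derivative f') (at x within S) \<Longrightarrow>
    ((\<lambda>s. dVpot E \<beta> (f s)) has_real_derivative \<beta> * Vpot E \<beta> (f x) * f') (at x within S)"
  by (rule DERIV_chain2[OF has_real_derivative_dVpot])

lemma abs_dVpot_le:
  assumes "0 \<le> \<beta>"
  shows "\<bar>dVpot E \<beta> s\<bar> \<le> sqrt \<beta> * Vpot E \<beta> s"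
proof (cases E)
  case Lv then show ?thesis using assms by (simp add: dVpot_def Vpot_def abs_mult)
next
  case ShG
  have "\<bar>sinh (sqrt \<beta> * s)\<bar> \<le> cosh (sqrt \<beta> * s)"
    unfolding sinh_field_def cosh_field_def
    using exp_gt_zero[of "sqrt \<beta> * s"] exp_gt_zero[of "- (sqrt \<beta> * s)"]
    by (auto simp: abs_le_iff field_simps)
  then show ?thesis using ShG assms by (simp add: dVpot_def Vpot_def abs_mult mult_left_mono)
qed

lemma measurable_dVpot[measurable]: "dVpot E \<beta> \<in> borel_measurable borel"
  unfolding dVpot_def by (cases E) (auto intro!: borel_measurable_continuous_onI continuous_intros)

definition v0_line_d1 :: "nat \<Rightarrow> real \<Rightarrow> real \<Rightarrow> model \<Rightarrow> field \<Rightarrow> field \<Rightarrow> real \<Rightarrow> real" where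
  "v0_line_d1 N lam \<beta> E \<psi> h s = v0_coeff N lam \<beta> * (\<Sum>x\<in>sites N. dVpot E \<beta> (\<psi> x + s * h x) * h x)"

definition v0_line_d2 :: "nat \<Rightarrow> real \<Rightarrow> real \<Rightarrow> model \<Rightarrow> field \<Rightarrow> field \<Rightarrow> real \<Rightarrow> real" where
  "v0_line_d2 N lam \<beta> E \<psi> h s = v0_coeff N lam \<beta> * (\<Sum>x\<in>sites N. \<beta> * Vpot E \<beta> (\<psi> x + s * h x) * (h x)\<^sup>2)"

lemma has_real_derivative_v0_line:
  "((\<lambda>s. v0 N lam \<beta> E (\<lambda>x. \<psi> x + s * h x)) has_real_derivative v0_line_d1 N lam \<beta> E \<psi> h s) (at s)"
  unfolding v0_eq_sum v0_line_d1_def by (auto intro!: derivative_eq_intros)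

lemma has_real_derivative_v0_line_d1:
  "0 \<le> \<beta> \<Longrightarrow> ((\<lambda>s. v0_line_d1 N lam \<beta> E \<psi> h s) has_real_derivative v0_line_d2 N lam \<beta> E \<psi> h s) (at s)"
  unfolding v0_line_d1_def v0_line_d2_def
  by (auto intro!: derivative_eq_intros sum.cong simp: power2_eq_square algebra_simps)

lemma has_real_derivative_exp_neg_v0_line:
  "((\<lambda>s. exp (- v0 N lam \<beta> E (\<lambda>x. \<psi> x + s * h x))) has_real_derivative
      - v0_line_d1 N lam \<beta> E \<psi> h s * exp (- v0 N lam \<beta> E (\<lambda>x. \<psi> x + s * h x))) (at s)"
  by (auto intro!: derivative_eq_intros has_real_derivative_v0_line)

lemma has_real_derivative_exp_neg_v0_line_d1:
  assumes "0 \<le> \<beta>"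
  shows "((\<lambda>s. - v0_line_d1 N lam \<beta> E \<psi> h s * exp (- v0 N lam \<beta> E (\<lambda>x. \<psi> x + s * h x))) has_real_derivative
      ((v0_line_d1 N lam \<beta> E \<psi> h s)\<^sup>2 - v0_line_d2 N lam \<beta> E \<psi> h s) * exp (- v0 N lam \<beta> E (\<lambda>x. \<psi> x + s * h x))) (at s)"
  using assms
  by (auto intro!: derivative_eq_intros has_real_derivative_v0_line has_real_derivative_v0_line_d1
      simp: power2_eq_square algebra_simps)

definition l1_norm_sites :: "nat \<Rightarrow> field \<Rightarrow> real" where
  "l1_norm_sites N h = (\<Sum>x\<in>sites N. \<bar>h x\<bar>)"

lemma abs_le_l1_norm_sites: "x \<in> sites N \<Longrightarrow> \<bar>h x\<bar> \<le> l1_norm_sites N h"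
  unfolding l1_norm_sites_def using finite_sites by (intro member_le_sum) auto

lemma l1_norm_sites_nonneg: "0 \<le> l1_norm_sites N h"
  unfolding l1_norm_sites_def by (simp add: sum_nonneg)

lemma abs_v0_line_d1_le:
  assumes lam: "0 \<le> lam" and b: "0 \<le> \<beta>"
  shows "\<bar>v0_line_d1 N lam \<beta> E \<psi> h s\<bar> \<le> sqrt \<beta> * l1_norm_sites N h * v0 N lam \<beta> E (\<lambda>x. \<psi> x + s * h x)"
proof -
  have "\<bar>\<Sum>x\<in>sites N. dVpot E \<beta> (\<psi> x + s * h x) * h x\<bar>
      \<le> (\<Sum>x\<in>sites N. sqrt \<beta> * l1_norm_sites N h * Vpot E \<beta> (\<psi> x + s * h x))"
  proof (rule order.trans[OF sum_abs sum_mono])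
    fix x assume "x \<in> sites N"
    moreover have "0 \<le> sqrt \<beta> * Vpot E \<beta> (\<psi> x + s * h x)"
      using Vpot_pos[of E \<beta> "\<psi> x + s * h x"] b by simp
    ultimately have "\<bar>dVpot E \<beta> (\<psi> x + s * h x)\<bar> * \<bar>h x\<bar> \<le> (sqrt \<beta> * Vpot E \<beta> (\<psi> x + s * h x)) * l1_norm_sites N h"
      using abs_dVpot_le[OF b] abs_le_l1_norm_sites by (intro mult_mono) auto
    then show "\<bar>dVpot E \<beta> (\<psi> x + s * h x) * h x\<bar> \<le> sqrt \<beta> * l1_norm_sites N h * Vpot E \<beta> (\<psi> x + s * h x)"
      by (simp add: abs_mult algebra_simps)
  qed
  from mult_left_mono[OF this v0_coeff_nonneg[OF lam]] show ?thesis
    unfolding v0_line_d1_def v0_eq_sum using v0_coeff_nonneg[OF lam]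
    by (simp add: abs_mult sum_distrib_left[symmetric] algebra_simps)
qed

lemma v0_line_d2_bounds:
  assumes lam: "0 \<le> lam" and b: "0 \<le> \<beta>"
  shows "0 \<le> v0_line_d2 N lam \<beta> E \<psi> h s"
    and "v0_line_d2 N lam \<beta> E \<psi> h s \<le> \<beta> * (l1_norm_sites N h)\<^sup>2 * v0 N lam \<beta> E (\<lambda>x. \<psi> x + s * h x)"
proof -
  show "0 \<le> v0_line_d2 N lam \<beta> E \<psi> h s"
    unfolding v0_line_d2_def using v0_coeff_nonneg[OF lam] b Vpot_pos[of E \<beta>]
    by (intro mult_nonneg_nonneg sum_nonneg) (auto intro: less_imp_le)
  have "(\<Sum>x\<in>sites N. \<beta> * Vpot E \<beta> (\<psi> x + s * h x) * (h x)\<^sup>2)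
      \<le> (\<Sum>x\<in>sites N. \<beta> * Vpot E \<beta> (\<psi> x + s * h x) * (l1_norm_sites N h)\<^sup>2)"
  proof (rule sum_mono)
    fix x assume "x \<in> sites N"
    then have "(h x)\<^sup>2 \<le> (l1_norm_sites N h)\<^sup>2"
      using abs_le_l1_norm_sites[of x N h] l1_norm_sites_nonneg[of N h] by (simp add: abs_le_square_iff[symmetric])
    then show "\<beta> * Vpot E \<beta> (\<psi> x + s * h x) * (h x)\<^sup>2 \<le> \<beta> * Vpot E \<beta> (\<psi> x + s * h x) * (l1_norm_sites N h)\<^sup>2"
      using b Vpot_pos[of E \<beta> "\<psi> x + s * h x"] by (intro mult_left_mono) auto
  qed
  from mult_left_mono[OF this v0_coeff_nonneg[OF lam]]
  show "v0_line_d2 N lam \<beta> E \<psi> h s \<le> \<beta> * (l1_norm_sites N h)\<^sup>2 * v0 N lam \<beta> E (\<lambda>x. \<psi> x + s * h x)"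
    unfolding v0_line_d2_def v0_eq_sum by (simp add: sum_distrib_left[symmetric] algebra_simps)
qed

definition gibbs_line_d1 :: "nat \<Rightarrow> real \<Rightarrow> real \<Rightarrow> real \<Rightarrow> model \<Rightarrow> real \<Rightarrow> field \<Rightarrow> field \<Rightarrow> real \<Rightarrow> field \<Rightarrow> real" where
  "gibbs_line_d1 N m lam \<beta> E t \<phi> h s \<zeta> =
     - v0_line_d1 N lam \<beta> E (\<lambda>x. \<phi> x + \<zeta> x) h s * gibbs_weight N m lam \<beta> E t (\<lambda>x. \<phi> x + s * h x) \<zeta>"

definition gibbs_line_d2 :: "nat \<Rightarrow> real \<Rightarrow> real \<Rightarrow> real \<Rightarrow> model \<Rightarrow> real \<Rightarrow> field \<Rightarrow> field \<Rightarrow> real \<Rightarrow> field \<Rightarrow> real" where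
  "gibbs_line_d2 N m lam \<beta> E t \<phi> h s \<zeta> =
     ((v0_line_d1 N lam \<beta> E (\<lambda>x. \<phi> x + \<zeta> x) h s)\<^sup>2 - v0_line_d2 N lam \<beta> E (\<lambda>x. \<phi> x + \<zeta> x) h s)
     * gibbs_weight N m lam \<beta> E t (\<lambda>x. \<phi> x + s * h x) \<zeta>"

lemma gibbs_weight_line:
  "gibbs_weight N m lam \<beta> E t (\<lambda>x. \<phi> x + s * h x) \<zeta>
    = exp (- v0 N lam \<beta> E (\<lambda>x. (\<phi> x + \<zeta> x) + s * h x)) * exp (- prec_form N m t \<zeta> / 2)"
  unfolding gibbs_weight_def by (simp add: add_ac)

lemma has_real_derivative_gibbs_weight_line:
  "((\<lambda>s. gibbs_weight N m lam \<beta> E t (\<lambda>x. \<phi> x + s * h x) \<zeta>) has_real_derivative gibbs_line_d1 N m lam \<beta> E t \<phi> h s \<zeta>) (at s)"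
  unfolding gibbs_line_d1_def gibbs_weight_line
  using DERIV_cmult_right[OF has_real_derivative_exp_neg_v0_line[of N lam \<beta> E "\<lambda>x. \<phi> x + \<zeta> x" h s]]
  by (simp add: mult.assoc)

lemma has_real_derivative_gibbs_line_d1:
  assumes "0 \<le> \<beta>"
  shows "((\<lambda>s. gibbs_line_d1 N m lam \<beta> E t \<phi> h s \<zeta>) has_real_derivative gibbs_line_d2 N m lam \<beta> E t \<phi> h s \<zeta>) (at s)"
  unfolding gibbs_line_d1_def gibbs_line_d2_def gibbs_weight_line
  using DERIV_cmult_right[OF has_real_derivative_exp_neg_v0_line_d1[OF assms, of N lam E "\<lambda>x. \<phi> x + \<zeta> x" h s]]
  by (simp add: mult.assoc)

lemma abs_gibbs_line_d1_le:
  assumes lam: "0 \<le> lam" and b: "0 \<le> \<beta>"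
  shows "\<bar>gibbs_line_d1 N m lam \<beta> E t \<phi> h s \<zeta>\<bar> \<le> sqrt \<beta> * l1_norm_sites N h * exp (- prec_form N m t \<zeta> / 2)"
proof -
  define v where "v = v0 N lam \<beta> E (\<lambda>x. (\<phi> x + \<zeta> x) + s * h x)"
  have v: "0 \<le> v" unfolding v_def by (rule v0_nonneg[OF lam])
  have "\<bar>v0_line_d1 N lam \<beta> E (\<lambda>x. \<phi> x + \<zeta> x) h s\<bar> \<le> sqrt \<beta> * l1_norm_sites N h * v"
    unfolding v_def by (rule abs_v0_line_d1_le[OF lam b])
  then have "\<bar>v0_line_d1 N lam \<beta> E (\<lambda>x. \<phi> x + \<zeta> x) h s\<bar> * exp (- v) \<le> sqrt \<beta> * l1_norm_sites N h * (v * exp (- v))"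
    by (simp add: mult_right_mono mult.assoc)
  also have "\<dots> \<le> sqrt \<beta> * l1_norm_sites N h"
    using mult_exp_neg_le_1[OF v] b l1_norm_sites_nonneg[of N h] by (simp add: mult_left_le)
  finally have "\<bar>v0_line_d1 N lam \<beta> E (\<lambda>x. \<phi> x + \<zeta> x) h s\<bar> * exp (- v) \<le> sqrt \<beta> * l1_norm_sites N h" .
  from mult_right_mono[OF this, of "exp (- prec_form N m t \<zeta> / 2)"] show ?thesis
    unfolding gibbs_line_d1_def gibbs_weight_line v_def[symmetric] by (simp add: abs_mult mult.assoc)
qed

lemma abs_gibbs_line_d2_le:
  assumes lam: "0 \<le> lam" and b: "0 \<le> \<beta>"
  shows "\<bar>gibbs_line_d2 N m lam \<beta> E t \<phi> h s \<zeta>\<bar> \<le> 5 * \<beta> * (l1_norm_sites N h)\<^sup>2 * exp (- prec_form N m t \<zeta> / 2)"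
proof -
  define v where "v = v0 N lam \<beta> E (\<lambda>x. (\<phi> x + \<zeta> x) + s * h x)"
  define U1 where "U1 = v0_line_d1 N lam \<beta> E (\<lambda>x. \<phi> x + \<zeta> x) h s"
  define U2 where "U2 = v0_line_d2 N lam \<beta> E (\<lambda>x. \<phi> x + \<zeta> x) h s"
  define K where "K = \<beta> * (l1_norm_sites N h)\<^sup>2"
  have v: "0 \<le> v" unfolding v_def by (rule v0_nonneg[OF lam])
  have "0 \<le> K" unfolding K_def using b by simp
  have "\<bar>U1\<bar> \<le> sqrt \<beta> * l1_norm_sites N h * v"
    unfolding U1_def v_def by (rule abs_v0_line_d1_le[OF lam b])
  then have "U1\<^sup>2 \<le> (sqrt \<beta> * l1_norm_sites N h * v)\<^sup>2"
    by (metis abs_ge_zero power2_abs power_mono)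
  also have "\<dots> = K * v\<^sup>2" unfolding K_def using b by (simp add: power_mult_distrib)
  finally have "U1\<^sup>2 \<le> K * v\<^sup>2" .
  moreover have "0 \<le> U2" "U2 \<le> K * v"
    using v0_line_d2_bounds[OF lam b, of N E "\<lambda>x. \<phi> x + \<zeta> x" h s] unfolding U2_def K_def v_def by simp_all
  moreover have "0 \<le> K * v\<^sup>2" "0 \<le> U1\<^sup>2" using \<open>0 \<le> K\<close> by simp_all
  ultimately have "\<bar>U1\<^sup>2 - U2\<bar> \<le> K * v\<^sup>2 + K * v"
    unfolding abs_le_iff by (intro conjI) linarith+
  from mult_right_mono[OF this, of "exp (- v) * exp (- prec_form N m t \<zeta> / 2)"]
  have "\<bar>gibbs_line_d2 N m lam \<beta> E t \<phi> h s \<zeta>\<bar>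
      \<le> (K * v\<^sup>2 + K * v) * (exp (- v) * exp (- prec_form N m t \<zeta> / 2))"
    unfolding gibbs_line_d2_def gibbs_weight_line U1_def[symmetric] U2_def[symmetric] v_def[symmetric]
    by (simp add: abs_mult)
  also have "\<dots> = K * (v\<^sup>2 * exp (- v) + v * exp (- v)) * exp (- prec_form N m t \<zeta> / 2)"
    by (simp add: algebra_simps)
  also have "\<dots> \<le> K * (4 + 1) * exp (- prec_form N m t \<zeta> / 2)"
    using mult_exp_neg_le_1[OF v] power2_mult_exp_neg_le_4[OF v] \<open>0 \<le> K\<close>
    by (intro mult_right_mono mult_left_mono add_mono) auto
  finally show ?thesis unfolding K_def by simp
qed

lemma measurable_gibbs_line_d1[measurable]:
  "gibbs_line_d1 N m lam \<beta> E t \<phi> h s \<in> borel_measurable (PiM I (\<lambda>_. lborel))"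
  unfolding gibbs_line_d1_def[abs_def] v0_line_d1_def by measurable

lemma measurable_gibbs_line_d2[measurable]:
  "gibbs_line_d2 N m lam \<beta> E t \<phi> h s \<in> borel_measurable (PiM I (\<lambda>_. lborel))"
  unfolding gibbs_line_d2_def[abs_def] v0_line_d1_def v0_line_d2_def by measurable

lemma integrable_gibbs_line_d1:
  assumes N: "1 \<le> N" and lam: "0 \<le> lam" and t: "0 < t" and b: "0 \<le> \<beta>"
  shows "integrable (PiM (sites N) (\<lambda>_. lborel)) (gibbs_line_d1 N m lam \<beta> E t \<phi> h s)"
proof (rule Bochner_Integration.integrable_bound)
  show "integrable (PiM (sites N) (\<lambda>_. lborel)) (\<lambda>\<zeta>. sqrt \<beta> * l1_norm_sites N h * exp (- prec_form N m t \<zeta> / 2))"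
    using integrable_exp_neg_prec_form[OF N t] by simp
  show "AE \<zeta> in PiM (sites N) (\<lambda>_. lborel). norm (gibbs_line_d1 N m lam \<beta> E t \<phi> h s \<zeta>)
      \<le> norm (sqrt \<beta> * l1_norm_sites N h * exp (- prec_form N m t \<zeta> / 2))"
    using abs_gibbs_line_d1_le[OF lam b] b l1_norm_sites_nonneg by (intro AE_I2) (simp add: abs_mult)
qed simp

lemma has_real_derivative_integral_gibbs_line:
  assumes N: "1 \<le> N" and lam: "0 \<le> lam" and t: "0 < t" and b: "0 \<le> \<beta>"
  shows "((\<lambda>s. \<integral>\<zeta>. gibbs_weight N m lam \<beta> E t (\<lambda>x. \<phi> x + s * h x) \<zeta> \<partial>PiM (sites N) (\<lambda>_. lborel))
     has_real_derivative (\<integral>\<zeta>. gibbs_line_d1 N m lam \<beta> E t \<phi> h s0 \<zeta> \<partial>PiM (sites N) (\<lambda>_. lborel))) (at s0)"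
  using integrable_exp_neg_prec_form[OF N t]
  by (intro has_real_derivative_integral_dominated[where w="\<lambda>\<zeta>. sqrt \<beta> * l1_norm_sites N h * exp (- prec_form N m t \<zeta> / 2)"]
      integrable_gibbs_weight[OF N lam t] has_real_derivative_gibbs_weight_line abs_gibbs_line_d1_le[OF lam b])
    auto

lemma has_real_derivative_integral_gibbs_line_d1:
  assumes N: "1 \<le> N" and lam: "0 \<le> lam" and t: "0 < t" and b: "0 \<le> \<beta>"
  shows "((\<lambda>s. \<integral>\<zeta>. gibbs_line_d1 N m lam \<beta> E t \<phi> h s \<zeta> \<partial>PiM (sites N) (\<lambda>_. lborel))
     has_real_derivative (\<integral>\<zeta>. gibbs_line_d2 N m lam \<beta> E t \<phi> h s0 \<zeta> \<partial>PiM (sites N) (\<lambda>_. lborel))) (at s0)"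
  using integrable_exp_neg_prec_form[OF N t]
  by (intro has_real_derivative_integral_dominated[where w="\<lambda>\<zeta>. 5 * \<beta> * (l1_norm_sites N h)\<^sup>2 * exp (- prec_form N m t \<zeta> / 2)"]
      integrable_gibbs_line_d1[OF N lam t b] has_real_derivative_gibbs_line_d1[OF b] abs_gibbs_line_d2_le[OF lam b])
    auto

theorem vt_line_twice_differentiable:
  assumes N: "1 \<le> N" and lam: "0 \<le> lam" and t: "0 \<le> t" and b: "0 \<le> \<beta>"
  shows "\<exists>g' D. (\<forall>s. ((\<lambda>s. vt N m lam \<beta> E t (\<lambda>x. \<phi> x + s * h x)) has_real_derivative g' s) (at s))
            \<and> (g' has_real_derivative D) (at 0)"
proof (cases "t = 0")
  case True
  then show ?thesis unfolding True vt_at_zero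
    using has_real_derivative_v0_line has_real_derivative_v0_line_d1[OF b] by blast
next
  case False
  then have t: "0 < t" using t by simp
  define F where "F s = (\<integral>\<zeta>. gibbs_weight N m lam \<beta> E t (\<lambda>x. \<phi> x + s * h x) \<zeta> \<partial>PiM (sites N) (\<lambda>_. lborel))" for s
  define F1 where "F1 s = (\<integral>\<zeta>. gibbs_line_d1 N m lam \<beta> E t \<phi> h s \<zeta> \<partial>PiM (sites N) (\<lambda>_. lborel))" for s
  define Z where "Z = (\<integral>\<zeta>. exp (- prec_form N m t \<zeta> / 2) \<partial>PiM (sites N) (\<lambda>_. lborel))"
  have Z: "0 < Z" unfolding Z_def by (rule integral_exp_neg_prec_form_pos[OF N t])
  have F: "0 < F s" for s unfolding F_def by (rule integral_gibbs_weight_pos[OF N lam t])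
  have dF: "(F has_real_derivative F1 s) (at s)" for s
    unfolding F_def[abs_def] F1_def by (rule has_real_derivative_integral_gibbs_line[OF N lam t b])
  have d1: "((\<lambda>s. vt N m lam \<beta> E t (\<lambda>x. \<phi> x + s * h x)) has_real_derivative - (F1 s / F s)) (at s)" for s
  proof -
    have "(\<lambda>s. vt N m lam \<beta> E t (\<lambda>x. \<phi> x + s * h x)) = (\<lambda>s. ln Z - ln (F s))"
    proof
      fix s
      show "vt N m lam \<beta> E t (\<lambda>x. \<phi> x + s * h x) = ln Z - ln (F s)"
        using vt_eq_ln_ratio[OF t] F[of s] Z by (simp add: ln_div F_def Z_def)
    qed
    then show ?thesis using F[of s] by (auto intro!: derivative_eq_intros dF simp: field_simps)
  qed
  have "(F1 has_real_derivative (\<integral>\<zeta>. gibbs_line_d2 N m lam \<beta> E t \<phi> h 0 \<zeta> \<partial>PiM (sites N) (\<lambda>_. lborel))) (at 0)"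
    unfolding F1_def[abs_def] by (rule has_real_derivative_integral_gibbs_line_d1[OF N lam t b])
  then have d2: "((\<lambda>s. - (F1 s / F s)) has_real_derivative
      - (((\<integral>\<zeta>. gibbs_line_d2 N m lam \<beta> E t \<phi> h 0 \<zeta> \<partial>PiM (sites N) (\<lambda>_. lborel)) * F 0 - F1 0 * F1 0) / (F 0 * F 0))) (at 0)"
    using F[of 0] by (auto intro!: derivative_eq_intros dF)
  from d1 d2 show ?thesis by (intro exI[of _ "\<lambda>s. - (F1 s / F s)"] exI conjI allI) auto
qed

lemma vt_convex_on_line:
  assumes "1 \<le> N" and "0 \<le> lam" and "0 \<le> t"
  shows "convex_on UNIV (\<lambda>s. vt N m lam \<beta> E t (\<lambda>x. \<phi> x + s * h x))"
proof (rule convex_onI)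
  fix \<tau> u v :: real assume "0 < \<tau>" "\<tau> < 1"
  then have "vt N m lam \<beta> E t (\<lambda>x. (1 - \<tau>) * (\<phi> x + u * h x) + (1 - (1 - \<tau>)) * (\<phi> x + v * h x))
      \<le> (1 - \<tau>) * vt N m lam \<beta> E t (\<lambda>x. \<phi> x + u * h x) + (1 - (1 - \<tau>)) * vt N m lam \<beta> E t (\<lambda>x. \<phi> x + v * h x)"
    by (intro vt_convex assms) auto
  then show "vt N m lam \<beta> E t (\<lambda>x. \<phi> x + ((1 - \<tau>) *\<^sub>R u + \<tau> *\<^sub>R v) * h x)
      \<le> (1 - \<tau>) * vt N m lam \<beta> E t (\<lambda>x. \<phi> x + u * h x) + \<tau> * vt N m lam \<beta> E t (\<lambda>x. \<phi> x + v * h x)"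
    by (simp add: algebra_simps)
qed simp

theorem mainTheorem5:
  fixes N :: nat and m lam \<beta> t :: real and E :: model
  assumes "N \<ge> 1" and "m > 0" and "lam > 0" and "\<beta> > 0" and "t \<ge> 0"
  shows "(\<forall>\<phi> h :: field. \<exists>g' D.
            (\<forall>s. ((\<lambda>s. vt N m lam \<beta> E t (\<lambda>x. \<phi> x + s * h x)) has_real_derivative g' s) (at s))
            \<and> (g' has_real_derivative D) (at 0) \<and> D \<ge> 0)
       \<and> (\<forall>\<phi> \<psi> :: field. \<forall>a :: real. 0 \<le> a \<and> a \<le> 1 \<longrightarrow>
            vt N m lam \<beta> E t (\<lambda>x. a * \<phi> x + (1 - a) * \<psi> x)
              \<le> a * vt N m lam \<beta> E t \<phi> + (1 - a) * vt N m lam \<beta> E t \<psi>)"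
proof (intro conjI allI impI)
  have N: "1 \<le> N" and lam: "0 \<le> lam" and t: "0 \<le> t" and b: "0 \<le> \<beta>" using assms by auto
  fix \<phi> h :: field
  obtain g' D where "\<forall>s. ((\<lambda>s. vt N m lam \<beta> E t (\<lambda>x. \<phi> x + s * h x)) has_real_derivative g' s) (at s)"
      and "(g' has_real_derivative D) (at 0)"
    using vt_line_twice_differentiable[OF N lam t b] by blast
  moreover from this have "0 \<le> D"
    using convex_on_second_derivative_nonneg[OF vt_convex_on_line[OF N lam t]] by blast
  ultimately show "\<exists>g' D. (\<forall>s. ((\<lambda>s. vt N m lam \<beta> E t (\<lambda>x. \<phi> x + s * h x)) has_real_derivative g' s) (at s))
      \<and> (g' has_real_derivative D) (at 0) \<and> D \<ge> 0" by blast
next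
  fix \<phi> \<psi> :: field and a :: real
  assume "0 \<le> a \<and> a \<le> 1"
  then show "vt N m lam \<beta> E t (\<lambda>x. a * \<phi> x + (1 - a) * \<psi> x) \<le> a * vt N m lam \<beta> E t \<phi> + (1 - a) * vt N m lam \<beta> E t \<psi>"
    using vt_convex assms by simp
qed

end
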